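(* Let $\phi^n,\phi^{n-1}\in\mathcal{C}_{\rm per}$ satisfy $0<\phi^n_{i,j},\phi^{n-1}_{i,j}<1/\rho$ for all $i,j$, and $\overline{\phi^n}=\overline{\phi^{n-1}}$. Let $\Delta t>0$ and $A>0$. Then there exists a unique $\phi^{n+1}\in\mathcal{C}_{\rm per}$ (together with $\mu^{n+1}\in\mathcal{C}_{\rm per}$) solving $$\frac{3\phi^{n+1}-4\phi^n+\phi^{n-1}}{2\Delta t}=\Delta_h\mu^{n+1},$$ $$\mu^{n+1}=S'(\phi^{n+1})+\kappa'(\phi^{n+1})\big(a_x((D_x\phi^{n+1})^2)+a_y((D_y\phi^{n+1})^2)\big)-2d_x\big(A_x\kappa(\phi^{n+1})D_x\phi^{n+1}\big)-2d_y\big(A_y\kappa(\phi^{n+1})D_y\phi^{n+1}\big)+H'(2\phi^n-\phi^{n-1})-A\Delta t\,\Delta_h(\phi^{n+1}-\phi^n),$$ and it satisfies $\overline{\phi^{n+1}}=\overline{\phi^n}$ and $0<\phi^{n+1}_{i,j}<1/\rho$ for all $i,j$.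
   Context: Parameters: $N_1,N_2,\chi>0$, $\tau=\sqrt{\pi N_2}N_1$, $\rho=1+N_2/\tau$. $S'(\phi)=(\frac1\tau+\frac1{N_1})\ln\phi-\rho\ln(1-\rho\phi)$, $H'(\phi)=-2\chi\rho\phi$, $\kappa(\phi)=\frac{1}{36\phi(1-\phi)}$, $\kappa'(\phi)=\frac{2\phi-1}{36\phi^2(1-\phi)^2}$, all applied pointwise. Grid: $\Omega=(0,L)^2$, $h=L/N$; $\mathcal{C}_{\rm per}$ = $N$-periodic grid functions $\nu_{i,j}$ at cell centers. Edge operators: $D_x\nu_{i+1/2,j}=(\nu_{i+1,j}-\nu_{i,j})/h$, $A_x\nu_{i+1/2,j}=(\nu_{i+1,j}+\nu_{i,j})/2$; for edge functions $f$: $a_xf_{i,j}=(f_{i+1/2,j}+f_{i-1/2,j})/2$, $d_xf_{i,j}=(f_{i+1/2,j}-f_{i-1/2,j})/h$; analogously in $y$. $\Delta_h\nu=d_x(D_x\nu)+d_y(D_y\nu)$ (five-point Laplacian). $\overline{\nu}=\frac{h^2}{|\Omega|}\sum_{i,j=1}^N\nu_{i,j}$. *)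

theory Defs
  imports Complex_Main
begin

text \<open>Grid functions are functions on integer index pairs (i,j); cell centres are
  indexed by (i,j), and an x-edge function value f i j stands for the value at the
  edge (i+1/2, j) (analogously for y-edges at (i, j+1/2)).\<close>

type_synonym gridfun = "int \<Rightarrow> int \<Rightarrow> real"

definition periodic :: "nat \<Rightarrow> gridfun \<Rightarrow> bool" where
  "periodic N \<nu> \<longleftrightarrow> (\<forall>i j. \<nu> (i + int N) j = \<nu> i j \<and> \<nu> i (j + int N) = \<nu> i j)"

definition Dx :: "real \<Rightarrow> gridfun \<Rightarrow> gridfun" where
  "Dx h \<nu> i j = (\<nu> (i+1) j - \<nu> i j) / h"
definition Dy :: "real \<Rightarrow> gridfun \<Rightarrow> gridfun" where
  "Dy h \<nu> i j = (\<nu> i (j+1) - \<nu> i j) / h"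
definition Ax :: "gridfun \<Rightarrow> gridfun" where
  "Ax \<nu> i j = (\<nu> (i+1) j + \<nu> i j) / 2"
definition Ay :: "gridfun \<Rightarrow> gridfun" where
  "Ay \<nu> i j = (\<nu> i (j+1) + \<nu> i j) / 2"
definition ax :: "gridfun \<Rightarrow> gridfun" where
  "ax f i j = (f i j + f (i-1) j) / 2"
definition ay :: "gridfun \<Rightarrow> gridfun" where
  "ay f i j = (f i j + f i (j-1)) / 2"
definition dx :: "real \<Rightarrow> gridfun \<Rightarrow> gridfun" where
  "dx h f i j = (f i j - f (i-1) j) / h"
definition dy :: "real \<Rightarrow> gridfun \<Rightarrow> gridfun" where
  "dy h f i j = (f i j - f i (j-1)) / h"

definition lap :: "real \<Rightarrow> gridfun \<Rightarrow> gridfun" where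
  "lap h \<nu> i j = dx h (Dx h \<nu>) i j + dy h (Dy h \<nu>) i j"

text \<open>Discrete mean over one period, \<Omega> = (0,L)^2, h = L/N.\<close>
definition gmean :: "nat \<Rightarrow> real \<Rightarrow> gridfun \<Rightarrow> real" where
  "gmean N L \<nu> = ((L / real N)^2 / L^2) * (\<Sum>i\<in>{1..int N}. \<Sum>j\<in>{1..int N}. \<nu> i j)"

definition tau :: "real \<Rightarrow> real \<Rightarrow> real" where
  "tau N1 N2 = sqrt (pi * N2) * N1"
definition rho :: "real \<Rightarrow> real \<Rightarrow> real" where
  "rho N1 N2 = 1 + N2 / tau N1 N2"

definition Sp :: "real \<Rightarrow> real \<Rightarrow> real \<Rightarrow> real" where
  "Sp N1 N2 \<phi> = (1 / tau N1 N2 + 1 / N1) * ln \<phi> - rho N1 N2 * ln (1 - rho N1 N2 * \<phi>)"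
definition Hp :: "real \<Rightarrow> real \<Rightarrow> real \<Rightarrow> real \<Rightarrow> real" where
  "Hp N1 N2 \<chi> \<phi> = - 2 * \<chi> * rho N1 N2 * \<phi>"
definition kappa :: "real \<Rightarrow> real" where
  "kappa \<phi> = 1 / (36 * \<phi> * (1 - \<phi>))"
definition kappap :: "real \<Rightarrow> real" where
  "kappap \<phi> = (2 * \<phi> - 1) / (36 * \<phi>^2 * (1 - \<phi>)^2)"

text \<open>The scheme: (\<phi>, \<mu>) solves the BDF2 step given \<phi>^n = p, \<phi>^{n-1} = q.\<close>
definition scheme :: "real \<Rightarrow> real \<Rightarrow> real \<Rightarrow> real \<Rightarrow> real \<Rightarrow> real \<Rightarrow>
    gridfun \<Rightarrow> gridfun \<Rightarrow> gridfun \<Rightarrow> gridfun \<Rightarrow> bool" where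
  "scheme N1 N2 \<chi> h dt A p q \<phi> \<mu> \<longleftrightarrow>
     (\<forall>i j. (3 * \<phi> i j - 4 * p i j + q i j) / (2 * dt) = lap h \<mu> i j) \<and>
     (\<forall>i j. \<mu> i j =
        Sp N1 N2 (\<phi> i j)
        + kappap (\<phi> i j) * (ax (\<lambda>a b. (Dx h \<phi> a b)^2) i j + ay (\<lambda>a b. (Dy h \<phi> a b)^2) i j)
        - 2 * dx h (\<lambda>a b. Ax (\<lambda>c d. kappa (\<phi> c d)) a b * Dx h \<phi> a b) i j
        - 2 * dy h (\<lambda>a b. Ay (\<lambda>c d. kappa (\<phi> c d)) a b * Dy h \<phi> a b) i j
        + Hp N1 N2 \<chi> (2 * p i j - q i j)
        - A * dt * lap h (\<lambda>a b. \<phi> a b - p a b) i j)"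

end

theory Submission
  imports Defs "HOL-Analysis.Function_Topology" "HOL-Analysis.Convex"
begin

text \<open>
  Uniqueness: the chemical potential is a monotone function of \<open>\<phi>\<close>, strictly so through the
  logarithmic term \<open>S'\<close> and weakly through the gradient term, because \<open>\<kappa>(a) (b - a)\<^sup>2\<close> is jointly
  convex for \<open>0 < a < 1\<close>. By the first equation the difference of two solutions is \<open>2 dt / 3\<close> times
  the discrete Laplacian of the difference of their chemical potentials, and testing with the latter
  gives a non-positive number, so the solutions coincide.

  Existence: the scheme is the Euler-Lagrange equation of a convex energy, namely the Flory-Huggins-de
  Gennes free energy with its stabilisation term plus a multiple of the squared \<open>H\<^sup>-\<^sup>1\<close> norm of the
  BDF2 time difference; the \<open>H\<^sup>-\<^sup>1\<close> norm is built from discrete Green's functions, which exist because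
  the discrete Poisson equation is solvable by minimising its Dirichlet energy. Minimise this energy
  over the mass-constrained set \<open>\<delta> \<le> \<phi> \<le> 1 / \<rho> - \<delta>\<close>. Since \<open>S'\<close> tends to \<open>-\<infinity>\<close> at \<open>0\<close> and to
  \<open>+\<infinity>\<close> at \<open>1 / \<rho>\<close> while the other contributions to the difference of the gradient at a minimum
  and at a maximum point are bounded above independently of \<open>\<delta>\<close>, moving mass from the maximum to the minimum would lower the energy of a minimiser touching
  the constraint once \<open>\<delta>\<close> is small. So the minimiser is interior and the Euler-Lagrange equation holds.

  Summing the first equation over the period gives conservation of the mean.
\<close>

section \<open>Periodic grid functions\<close>

definition period_rep :: "nat \<Rightarrow> int \<Rightarrow> int" where
  "period_rep N x = (x - 1) mod int N + 1"

definition grid_sum :: "nat \<Rightarrow> gridfun \<Rightarrow> real" where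
  "grid_sum N f = (\<Sum>i\<in>{1..int N}. \<Sum>j\<in>{1..int N}. f i j)"

lemma period_rep_mem:
  assumes "0 < N" shows "period_rep N x \<in> {1..int N}"
proof -
  have "0 \<le> (x - 1) mod int N" "(x - 1) mod int N < int N" using assms by simp_all
  then show ?thesis unfolding period_rep_def by simp
qed

lemma period_rep_id: "x \<in> {1..int N} \<Longrightarrow> period_rep N x = x"
  unfolding period_rep_def by auto

lemma period_rep_add_rep: "period_rep N (period_rep N x + y) = period_rep N (x + y)"
  unfolding period_rep_def by (simp add: mod_add_left_eq add_diff_eq[symmetric] diff_add_eq)

lemma period_rep_add_period: "period_rep N (x + int N) = period_rep N x"
  unfolding period_rep_def using mod_add_self2[of "x - 1" "int N"] by (simp add: algebra_simps)

lemma shift_periods: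
  assumes "\<And>i. g (i + int N) = g i"
  shows "g (i + k * int N) = g i"
proof (induction k rule: int_induct[where k = 0])
  case (step1 k)
  then show ?case using assms[of "i + k * int N"] by (simp add: algebra_simps)
next
  case (step2 k)
  then show ?case using assms[of "i + (k - 1) * int N"] by (simp add: algebra_simps)
qed simp

lemma eq_at_period_rep:
  assumes "\<And>i. g (i + int N) = g i"
  shows "g (period_rep N x) = g x"
proof -
  have "x = period_rep N x + ((x - 1) div int N) * int N"
    unfolding period_rep_def by (simp add: mod_div_mult_eq[of "x - 1", symmetric] algebra_simps)
  then show ?thesis using shift_periods[of g N, OF assms] by metis
qed

lemma periodic_at_period_rep:
  assumes "periodic N f"
  shows "f (period_rep N x) (period_rep N y) = f x y"
proof -
  have "f (period_rep N x) y' = f x y'" for y'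
    by (rule eq_at_period_rep[where g = "\<lambda>i. f i y'"]) (use assms in \<open>simp add: periodic_def\<close>)
  moreover have "f x (period_rep N y) = f x y"
    by (rule eq_at_period_rep[where g = "f x"]) (use assms in \<open>simp add: periodic_def\<close>)
  ultimately show ?thesis by simp
qed

lemma periodic_eqI:
  assumes "0 < N" "periodic N f" "periodic N g"
    and "\<And>i j. i \<in> {1..int N} \<Longrightarrow> j \<in> {1..int N} \<Longrightarrow> f i j = g i j"
  shows "f = g"
proof (intro ext)
  fix x y
  show "f x y = g x y"
    using assms(4)[OF period_rep_mem period_rep_mem] assms(1)
    by (simp add: periodic_at_period_rep[OF assms(2)] periodic_at_period_rep[OF assms(3)])
qed

lemma periodic_attains_min:
  assumes "0 < N" "periodic N f"
  obtains a b where "a \<in> {1..int N}" "b \<in> {1..int N}" "\<And>x y. f a b \<le> f x y"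
proof -
  let ?V = "(\<lambda>(i, j). f i j) ` ({1..int N} \<times> {1..int N})"
  have "Min ?V \<in> ?V" using assms(1) by (intro Min_in) auto
  then obtain a b where ab: "a \<in> {1..int N}" "b \<in> {1..int N}" "Min ?V = f a b" by auto
  have "f a b \<le> f x y" for x y
  proof -
    have "f a b \<le> f (period_rep N x) (period_rep N y)"
      unfolding ab(3)[symmetric] using period_rep_mem[OF assms(1)] by (intro Min_le) auto
    then show ?thesis by (simp add: periodic_at_period_rep[OF assms(2)])
  qed
  with ab that show ?thesis by blast
qed

lemma periodic_attains_max:
  assumes "0 < N" "periodic N f"
  obtains a b where "a \<in> {1..int N}" "b \<in> {1..int N}" "\<And>x y. f x y \<le> f a b"
proof -
  have "periodic N (\<lambda>i j. - f i j)" using assms(2) by (simp add: periodic_def)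
  then show ?thesis using periodic_attains_min[OF assms(1)] that by (metis neg_le_iff_le)
qed

lemma periodic_compose: "periodic N f \<Longrightarrow> periodic N (\<lambda>i j. F (f i j))"
  unfolding periodic_def by simp

lemma periodic_compose2: "periodic N f \<Longrightarrow> periodic N g \<Longrightarrow> periodic N (\<lambda>i j. F (f i j) (g i j))"
  unfolding periodic_def by simp

lemma periodic_shift: "periodic N f \<Longrightarrow> periodic N (\<lambda>i j. f (i + a) (j + b))"
  unfolding periodic_def by (metis add.commute add.left_commute)

lemma periodic_const: "periodic N (\<lambda>i j. c)"
  unfolding periodic_def by simp

lemma periodic_bounded:
  assumes "0 < N" "periodic N f"
  obtains M where "\<And>x y. \<bar>f x y\<bar> \<le> M"
  using periodic_attains_max[OF assms(1) periodic_compose[OF assms(2), of abs]] by metis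

lemma periodic_Dx: "periodic N f \<Longrightarrow> periodic N (Dx h f)"
  using periodic_compose2[OF periodic_shift[of N f 1 0]] unfolding Dx_def[abs_def] by simp

lemma periodic_Ax: "periodic N f \<Longrightarrow> periodic N (Ax f)"
  using periodic_compose2[OF periodic_shift[of N f 1 0]] unfolding Ax_def[abs_def] by simp

lemma periodic_dx: "periodic N f \<Longrightarrow> periodic N (dx h f)"
  using periodic_compose2[OF _ periodic_shift[of N f "-1" 0]] unfolding dx_def[abs_def] by simp

lemma periodic_ax: "periodic N f \<Longrightarrow> periodic N (ax f)"
  using periodic_compose2[OF _ periodic_shift[of N f "-1" 0]] unfolding ax_def[abs_def] by simp

lemma periodic_Dy: "periodic N f \<Longrightarrow> periodic N (Dy h f)"
  using periodic_compose2[OF periodic_shift[of N f 0 1]] unfolding Dy_def[abs_def] by simp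

lemma periodic_dy: "periodic N f \<Longrightarrow> periodic N (dy h f)"
  using periodic_compose2[OF _ periodic_shift[of N f 0 "-1"]] unfolding dy_def[abs_def] by simp

lemma periodic_lap: "periodic N f \<Longrightarrow> periodic N (lap h f)"
  using periodic_compose2[OF periodic_dx periodic_dy, OF periodic_Dx periodic_Dy]
  unfolding lap_def[abs_def] by simp

lemma periodic_compose3:
  "periodic N f \<Longrightarrow> periodic N g \<Longrightarrow> periodic N k \<Longrightarrow> periodic N (\<lambda>i j. F (f i j) (g i j) (k i j))"
  unfolding periodic_def by simp

lemma periodic_transpose: "periodic N f \<Longrightarrow> periodic N (\<lambda>i j. f j i)"
  unfolding periodic_def by simp

lemma grid_sum_add: "grid_sum N (\<lambda>i j. f i j + g i j) = grid_sum N f + grid_sum N g"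
  unfolding grid_sum_def by (simp add: sum.distrib)

lemma grid_sum_diff: "grid_sum N (\<lambda>i j. f i j - g i j) = grid_sum N f - grid_sum N g"
  unfolding grid_sum_def by (simp add: sum_subtractf)

lemma grid_sum_cmult: "grid_sum N (\<lambda>i j. c * f i j) = c * grid_sum N f"
  unfolding grid_sum_def by (simp add: sum_distrib_left)

lemma grid_sum_multc: "grid_sum N (\<lambda>i j. f i j * c) = grid_sum N f * c"
  unfolding grid_sum_def by (simp add: sum_distrib_right)

lemma grid_sum_divide: "grid_sum N (\<lambda>i j. f i j / c) = grid_sum N f / c"
  unfolding grid_sum_def by (simp add: sum_divide_distrib)

lemma grid_sum_const: "grid_sum N (\<lambda>i j. c) = (real N)\<^sup>2 * c"
  unfolding grid_sum_def by (simp add: power2_eq_square)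

lemma grid_sum_cong:
  "(\<And>i j. i \<in> {1..int N} \<Longrightarrow> j \<in> {1..int N} \<Longrightarrow> f i j = g i j) \<Longrightarrow> grid_sum N f = grid_sum N g"
  unfolding grid_sum_def by (auto intro!: sum.cong)

lemma grid_sum_mono:
  "(\<And>i j. i \<in> {1..int N} \<Longrightarrow> j \<in> {1..int N} \<Longrightarrow> f i j \<le> g i j) \<Longrightarrow> grid_sum N f \<le> grid_sum N g"
  unfolding grid_sum_def by (auto intro!: sum_mono)

lemma grid_sum_nonneg:
  "(\<And>i j. i \<in> {1..int N} \<Longrightarrow> j \<in> {1..int N} \<Longrightarrow> 0 \<le> f i j) \<Longrightarrow> 0 \<le> grid_sum N f"
  unfolding grid_sum_def by (auto intro!: sum_nonneg)

lemma grid_sum_abs: "\<bar>grid_sum N f\<bar> \<le> grid_sum N (\<lambda>i j. \<bar>f i j\<bar>)"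
  unfolding grid_sum_def by (rule order_trans[OF sum_abs]) (auto intro!: sum_mono)

lemma member_le_grid_sum:
  assumes "\<And>i j. i \<in> {1..int N} \<Longrightarrow> j \<in> {1..int N} \<Longrightarrow> 0 \<le> f i j"
    and "a \<in> {1..int N}" "b \<in> {1..int N}"
  shows "f a b \<le> grid_sum N f"
proof -
  have "f a b \<le> (\<Sum>j\<in>{1..int N}. f a j)" using assms by (intro member_le_sum) auto
  also have "\<dots> \<le> grid_sum N f"
    unfolding grid_sum_def using assms by (intro member_le_sum sum_nonneg) auto
  finally show ?thesis .
qed

lemma grid_sum_nonneg_eq_0:
  assumes "\<And>i j. i \<in> {1..int N} \<Longrightarrow> j \<in> {1..int N} \<Longrightarrow> 0 \<le> f i j" "grid_sum N f \<le> 0"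
    and "a \<in> {1..int N}" "b \<in> {1..int N}"
  shows "f a b = 0"
proof -
  have "f a b \<le> grid_sum N f" by (rule member_le_grid_sum) (use assms in auto)
  then show ?thesis using assms(1)[OF assms(3,4)] assms(2) by linarith
qed

lemma grid_sum_DERIV:
  "(\<And>i j. DERIV (\<lambda>s. F s i j) x :> F' i j) \<Longrightarrow> DERIV (\<lambda>s. grid_sum N (F s)) x :> grid_sum N F'"
  unfolding grid_sum_def by (intro DERIV_sum)

lemma grid_sum_sq_le: "(grid_sum N f)\<^sup>2 \<le> (real N)\<^sup>2 * grid_sum N (\<lambda>i j. (f i j)\<^sup>2)"
proof -
  have row: "(\<Sum>j\<in>{1..int N}. f i j)\<^sup>2 \<le> real N * (\<Sum>j\<in>{1..int N}. (f i j)\<^sup>2)" for i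
    using sum_squared_le_sum_of_squares[of "f i" "{1..int N}"] by (simp add: mult.commute)
  have "(grid_sum N f)\<^sup>2 \<le> real N * (\<Sum>i\<in>{1..int N}. (\<Sum>j\<in>{1..int N}. f i j)\<^sup>2)"
    using sum_squared_le_sum_of_squares[of "\<lambda>i. \<Sum>j\<in>{1..int N}. f i j" "{1..int N}"]
    unfolding grid_sum_def by (simp add: mult.commute)
  also have "\<dots> \<le> real N * (\<Sum>i\<in>{1..int N}. real N * (\<Sum>j\<in>{1..int N}. (f i j)\<^sup>2))"
    by (intro mult_left_mono sum_mono row) simp
  finally show ?thesis unfolding grid_sum_def by (simp add: sum_distrib_left power2_eq_square mult.assoc)
qed

lemma sum_periodic_shift:
  fixes g :: "int \<Rightarrow> 'a::comm_monoid_add"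
  assumes "\<And>i. g (i + int N) = g i"
  shows "(\<Sum>i\<in>{1..int N}. g (i + a)) = (\<Sum>i\<in>{1..int N}. g i)"
proof (cases "N = 0")
  case False
  have rep: "period_rep N x \<in> {1..int N}" for x using False period_rep_mem by blast
  have inv: "period_rep N (period_rep N (x + y) - y) = period_rep N x"
    and inv': "period_rep N (period_rep N (x - y) + y) = period_rep N x" for x y
    using period_rep_add_rep[of N "x + y" "- y"] period_rep_add_rep[of N "x - y" y] by simp_all
  have "(\<Sum>i\<in>{1..int N}. g (i + a)) = (\<Sum>i\<in>{1..int N}. g (period_rep N (i + a)))"
    using eq_at_period_rep[of g N, OF assms] by simp
  also have "\<dots> = (\<Sum>i\<in>{1..int N}. g i)"
    by (rule sum.reindex_bij_witness[where i = "\<lambda>j. period_rep N (j - a)" and j = "\<lambda>i. period_rep N (i + a)"])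
      (use rep in \<open>simp_all add: inv inv' period_rep_id\<close>)
  finally show ?thesis .
qed simp

lemma grid_sum_shift:
  assumes "periodic N f"
  shows "grid_sum N (\<lambda>i j. f (i + a) (j + b)) = grid_sum N f"
proof -
  have "grid_sum N (\<lambda>i j. f (i + a) (j + b)) = (\<Sum>i\<in>{1..int N}. \<Sum>j\<in>{1..int N}. f (i + a) j)"
    unfolding grid_sum_def using assms by (intro sum.cong refl sum_periodic_shift) (simp add: periodic_def)
  also have "\<dots> = (\<Sum>j\<in>{1..int N}. \<Sum>i\<in>{1..int N}. f (i + a) j)" by (rule sum.swap)
  also have "\<dots> = (\<Sum>j\<in>{1..int N}. \<Sum>i\<in>{1..int N}. f i j)"
    using assms by (intro sum.cong refl sum_periodic_shift) (simp add: periodic_def)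
  also have "\<dots> = grid_sum N f" unfolding grid_sum_def by (rule sum.swap)
  finally show ?thesis .
qed

lemma grid_sum_transpose: "grid_sum N (\<lambda>i j. f j i) = grid_sum N f"
  unfolding grid_sum_def by (rule sum.swap)

definition delta_at :: "nat \<Rightarrow> int \<Rightarrow> int \<Rightarrow> gridfun" where
  "delta_at N a b x y = (if period_rep N x = a \<and> period_rep N y = b then 1 else 0)"

lemma periodic_delta_at: "periodic N (delta_at N a b)"
  unfolding periodic_def delta_at_def by (simp add: period_rep_add_period)

lemma grid_sum_mult_delta_at:
  assumes "a \<in> {1..int N}" "b \<in> {1..int N}"
  shows "grid_sum N (\<lambda>i j. f i j * delta_at N a b i j) = f a b"
proof -
  have "grid_sum N (\<lambda>i j. f i j * delta_at N a b i j)
      = (\<Sum>i\<in>{1..int N}. \<Sum>j\<in>{1..int N}. if i = a \<and> j = b then f a b else 0)"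
    unfolding grid_sum_def delta_at_def by (intro sum.cong refl) (auto simp: period_rep_id)
  also have "\<dots> = (\<Sum>i\<in>{1..int N}. if i = a then f a b else 0)"
    using assms(2) by (intro sum.cong refl) auto
  also have "\<dots> = f a b" using assms(1) by simp
  finally show ?thesis .
qed

lemma grid_sum_delta_at: "a \<in> {1..int N} \<Longrightarrow> b \<in> {1..int N} \<Longrightarrow> grid_sum N (delta_at N a b) = 1"
  using grid_sum_mult_delta_at[of a N b "\<lambda>i j. 1"] by simp

lemma grid_sum_mult_dx:
  assumes "periodic N u" "periodic N e"
  shows "grid_sum N (\<lambda>i j. u i j * dx h e i j) = - grid_sum N (\<lambda>i j. Dx h u i j * e i j)"
proof -
  have "grid_sum N (\<lambda>i j. u i j * e (i - 1) j) = grid_sum N (\<lambda>i j. u (i + 1) j * e i j)"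
    using grid_sum_shift[OF periodic_compose2[where F = "(*)", OF periodic_shift[OF assms(1), of 1 0] assms(2)],
        of "-1" 0] by simp
  then show ?thesis unfolding dx_def Dx_def
    by (simp add: right_diff_distrib left_diff_distrib grid_sum_diff grid_sum_divide diff_divide_distrib)
qed

lemma grid_sum_mult_dy:
  assumes "periodic N u" "periodic N e"
  shows "grid_sum N (\<lambda>i j. u i j * dy h e i j) = - grid_sum N (\<lambda>i j. Dy h u i j * e i j)"
proof -
  have "grid_sum N (\<lambda>i j. u i j * e i (j - 1)) = grid_sum N (\<lambda>i j. u i (j + 1) * e i j)"
    using grid_sum_shift[OF periodic_compose2[where F = "(*)", OF periodic_shift[OF assms(1), of 0 1] assms(2)],
        of 0 "-1"] by simp
  then show ?thesis unfolding dy_def Dy_def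
    by (simp add: right_diff_distrib left_diff_distrib grid_sum_diff grid_sum_divide diff_divide_distrib)
qed

lemma grid_sum_mult_ax:
  assumes "periodic N f" "periodic N g"
  shows "grid_sum N (\<lambda>i j. f i j * ax g i j) = grid_sum N (\<lambda>i j. Ax f i j * g i j)"
proof -
  have "grid_sum N (\<lambda>i j. f i j * g (i - 1) j) = grid_sum N (\<lambda>i j. f (i + 1) j * g i j)"
    using grid_sum_shift[OF periodic_compose2[where F = "(*)", OF periodic_shift[OF assms(1), of 1 0] assms(2)],
        of "-1" 0] by simp
  then show ?thesis unfolding ax_def Ax_def
    by (simp add: distrib_left distrib_right add_divide_distrib grid_sum_add grid_sum_divide)
qed

lemma grid_sum_mult_lap:
  assumes "periodic N v" "periodic N u"
  shows "grid_sum N (\<lambda>i j. v i j * lap h u i j)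
    = - grid_sum N (\<lambda>i j. Dx h v i j * Dx h u i j + Dy h v i j * Dy h u i j)"
  using grid_sum_mult_dx[OF assms(1) periodic_Dx[OF assms(2)], of h]
    grid_sum_mult_dy[OF assms(1) periodic_Dy[OF assms(2)], of h]
  unfolding lap_def by (simp add: distrib_left grid_sum_add)

lemma grid_sum_lap: "periodic N u \<Longrightarrow> grid_sum N (lap h u) = 0"
  using grid_sum_mult_lap[OF periodic_const[of N 1]] by (simp add: Dx_def Dy_def grid_sum_def)

lemma grid_sum_mult_lap_sym:
  assumes "periodic N v" "periodic N u"
  shows "grid_sum N (\<lambda>i j. v i j * lap h u i j) = grid_sum N (\<lambda>i j. u i j * lap h v i j)"
  using grid_sum_mult_lap[OF assms] grid_sum_mult_lap[OF assms(2,1)] by (simp add: mult.commute)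

lemma lap_expand: "lap h f x y = (f (x + 1) y + f (x - 1) y + f x (y + 1) + f x (y - 1) - 4 * f x y) / h\<^sup>2"
  unfolding lap_def dx_def dy_def Dx_def Dy_def by (simp add: power2_eq_square divide_inverse algebra_simps)

lemma lap_diff: "lap h (\<lambda>a b. f a b - g a b) i j = lap h f i j - lap h g i j"
  unfolding lap_expand by (simp add: diff_divide_distrib[symmetric] algebra_simps)

lemma lap_add_const: "lap h (\<lambda>a b. f a b + c) i j = lap h f i j"
  unfolding lap_expand by (simp add: algebra_simps)

section \<open>The energy densities\<close>

lemma kappa_sq_tangent_le:
  fixes a1 a2 b1 b2 :: real
  assumes "0 < a1" "a1 < 1" "0 < a2" "a2 < 1"
  shows "kappa a1 * (b1 - a1)\<^sup>2 + (kappap a1 * (b1 - a1)\<^sup>2 - 2 * kappa a1 * (b1 - a1)) * (a2 - a1)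
      + 2 * kappa a1 * (b1 - a1) * (b2 - b1) \<le> kappa a2 * (b2 - a2)\<^sup>2"
proof -
  txt \<open>With \<open>u = 36 a (1 - a)\<close>, \<open>x = b - a\<close> and \<open>d = a2 - a1\<close> the gap is the sum of squares
    \<open>(x2 u1 - x1 u2)\<^sup>2 / (u1\<^sup>2 u2) + 36 x1\<^sup>2 d\<^sup>2 / u1\<^sup>2\<close>.\<close>
  define u1 u2 x1 x2 d where "u1 = 36 * a1 * (1 - a1)" and "u2 = 36 * a2 * (1 - a2)"
    and "x1 = b1 - a1" and "x2 = b2 - a2" and "d = a2 - a1"
  have u: "0 < u1" "0 < u2" using assms by (simp_all add: u1_def u2_def)
  have kappa: "kappa a1 = 1 / u1" "kappa a2 = 1 / u2" by (simp_all add: kappa_def u1_def u2_def)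
  have kappap: "kappap a1 = 36 * (2 * a1 - 1) / u1\<^sup>2"
    unfolding kappap_def u1_def by (simp add: divide_simps)
  have b: "b2 - b1 = x2 - x1 + d" "36 * (2 * a1 - 1) * d = u1 - u2 - 36 * d\<^sup>2"
    by (simp_all add: x1_def x2_def d_def u1_def u2_def power2_eq_square algebra_simps)
  have "kappa a2 * (b2 - a2)\<^sup>2 - (kappa a1 * (b1 - a1)\<^sup>2 + (kappap a1 * (b1 - a1)\<^sup>2 - 2 * kappa a1 * (b1 - a1)) * (a2 - a1)
      + 2 * kappa a1 * (b1 - a1) * (b2 - b1))
    = x2\<^sup>2 / u2 - (x1\<^sup>2 / u1 + (36 * (2 * a1 - 1) * d) * x1\<^sup>2 / u1\<^sup>2 - 2 * x1 * d / u1 + 2 * x1 * (x2 - x1 + d) / u1)"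
    unfolding kappa kappap b(1) x1_def[symmetric] x2_def[symmetric] d_def[symmetric] by (simp add: field_simps)
  also have "\<dots> = (x2 * u1 - x1 * u2)\<^sup>2 / (u1\<^sup>2 * u2) + 36 * x1\<^sup>2 * d\<^sup>2 / u1\<^sup>2"
    unfolding b(2) using u by (simp add: field_simps power2_eq_square)
  also have "\<dots> \<ge> 0" using u by simp
  finally show ?thesis by simp
qed

lemma kappa_sq_grad_monotone:
  fixes a1 a2 b1 b2 :: real
  assumes "0 < a1" "a1 < 1" "0 < a2" "a2 < 1"
  shows "0 \<le> (kappap a1 * (b1 - a1)\<^sup>2 - 2 * kappa a1 * (b1 - a1)
              - (kappap a2 * (b2 - a2)\<^sup>2 - 2 * kappa a2 * (b2 - a2))) * (a1 - a2)
            + (2 * kappa a1 * (b1 - a1) - 2 * kappa a2 * (b2 - a2)) * (b1 - b2)"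
  using kappa_sq_tangent_le[OF assms, of b1 b2] kappa_sq_tangent_le[OF assms(3,4,1,2), of b2 b1]
  by (simp add: algebra_simps)

definition edge_energy :: "real \<Rightarrow> real \<Rightarrow> real \<Rightarrow> real" where
  "edge_energy h a b = (kappa a + kappa b) / 2 * ((b - a) / h)\<^sup>2"

definition edge_energy_deriv :: "real \<Rightarrow> real \<Rightarrow> real \<Rightarrow> real \<Rightarrow> real \<Rightarrow> real" where
  "edge_energy_deriv h a b wa wb =
     (kappap a * wa + kappap b * wb) / 2 * ((b - a) / h)\<^sup>2 + (kappa a + kappa b) * ((b - a) / h) * ((wb - wa) / h)"

lemma DERIV_kappa:
  assumes "0 < x" "x < 1"
  shows "DERIV kappa x :> kappap x"
proof -
  have "DERIV kappa x :> - (36 * (1 - x) - 36 * x) / (36 * x * (1 - x))\<^sup>2"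
    unfolding kappa_def[abs_def] using assms
    by (auto intro!: derivative_eq_intros simp: field_simps power2_eq_square)
  moreover have "- (36 * (1 - x) - 36 * x) / (36 * x * (1 - x))\<^sup>2 = kappap x"
    unfolding kappap_def using assms by (simp add: divide_simps)
  ultimately show ?thesis by simp
qed

lemma DERIV_edge_energy:
  assumes "0 < a" "a < 1" "0 < b" "b < 1"
  shows "DERIV (\<lambda>s. edge_energy h (a + s * wa) (b + s * wb)) 0 :> edge_energy_deriv h a b wa wb"
proof -
  have ka: "DERIV (\<lambda>s. kappa (a + s * wa)) 0 :> kappap a * wa"
    by (rule DERIV_chain2[of kappa "kappap a" "\<lambda>s. a + s * wa" 0 wa])
      (use DERIV_kappa[OF assms(1,2)] in \<open>auto intro!: derivative_eq_intros\<close>)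
  have kb: "DERIV (\<lambda>s. kappa (b + s * wb)) 0 :> kappap b * wb"
    by (rule DERIV_chain2[of kappa "kappap b" "\<lambda>s. b + s * wb" 0 wb])
      (use DERIV_kappa[OF assms(3,4)] in \<open>auto intro!: derivative_eq_intros\<close>)
  have sq: "DERIV (\<lambda>s. ((b + s * wb - (a + s * wa)) / h)\<^sup>2) 0 :> 2 * ((b - a) / h) * ((wb - wa) / h)"
    by (auto intro!: derivative_eq_intros simp: divide_inverse algebra_simps)
  have "DERIV (\<lambda>s. edge_energy h (a + s * wa) (b + s * wb)) 0
      :> (kappap a * wa + kappap b * wb) / 2 * ((b - a) / h)\<^sup>2
         + 2 * ((b - a) / h) * ((wb - wa) / h) * ((kappa a + kappa b) / 2)"
    using DERIV_mult[OF DERIV_cdivide[OF DERIV_add[OF ka kb], of 2] sq]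
    unfolding edge_energy_def by simp
  moreover have "2 * x * y * (k / 2) = k * x * y" for x y k :: real by simp
  ultimately show ?thesis unfolding edge_energy_deriv_def by metis
qed

lemma edge_energy_deriv_monotone:
  assumes "0 < a1" "a1 < 1" "0 < a2" "a2 < 1" "0 < b1" "b1 < 1" "0 < b2" "b2 < 1" "0 < h"
  shows "0 \<le> edge_energy_deriv h a1 b1 (a1 - a2) (b1 - b2) - edge_energy_deriv h a2 b2 (a1 - a2) (b1 - b2)"
proof -
  txt \<open>The edge energy is \<open>(F a b + F b a) / (2 h\<^sup>2)\<close> with \<open>F a b = kappa a (b - a)\<^sup>2\<close>.\<close>
  have "h\<^sup>2 * (edge_energy_deriv h a1 b1 (a1 - a2) (b1 - b2) - edge_energy_deriv h a2 b2 (a1 - a2) (b1 - b2))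
     = ((kappap a1 * (b1 - a1)\<^sup>2 - 2 * kappa a1 * (b1 - a1)
              - (kappap a2 * (b2 - a2)\<^sup>2 - 2 * kappa a2 * (b2 - a2))) * (a1 - a2)
            + (2 * kappa a1 * (b1 - a1) - 2 * kappa a2 * (b2 - a2)) * (b1 - b2)
       + ((kappap b1 * (a1 - b1)\<^sup>2 - 2 * kappa b1 * (a1 - b1)
              - (kappap b2 * (a2 - b2)\<^sup>2 - 2 * kappa b2 * (a2 - b2))) * (b1 - b2)
            + (2 * kappa b1 * (a1 - b1) - 2 * kappa b2 * (a2 - b2)) * (a1 - a2))) / 2"
    unfolding edge_energy_deriv_def using assms(9) by (simp add: power2_eq_square field_simps)
  also have "\<dots> \<ge> 0"
    using kappa_sq_grad_monotone[OF assms(1-4), of b1 b2] kappa_sq_grad_monotone[OF assms(5-8), of a1 a2]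
    by simp
  finally show ?thesis using assms(9) by (simp add: zero_le_mult_iff)
qed

lemma tau_pos: "0 < N1 \<Longrightarrow> 0 < N2 \<Longrightarrow> 0 < tau N1 N2"
  unfolding tau_def by simp

lemma rho_gt_1: "0 < N1 \<Longrightarrow> 0 < N2 \<Longrightarrow> 1 < rho N1 N2"
  unfolding rho_def using tau_pos[of N1 N2] by simp

lemma Sp_strict_mono:
  assumes "0 < N1" "0 < N2" "0 < x" "x < y" "y < 1 / rho N1 N2"
  shows "Sp N1 N2 x < Sp N1 N2 y"
proof -
  have r: "1 < rho N1 N2" using rho_gt_1 assms by simp
  have "0 < 1 - rho N1 N2 * y" "rho N1 N2 * x < rho N1 N2 * y"
    using assms r by (simp_all add: field_simps)
  then have "ln (1 - rho N1 N2 * y) < ln (1 - rho N1 N2 * x)" by simp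
  then have "- rho N1 N2 * ln (1 - rho N1 N2 * x) < - rho N1 N2 * ln (1 - rho N1 N2 * y)"
    using r by simp
  moreover have "(1 / tau N1 N2 + 1 / N1) * ln x < (1 / tau N1 N2 + 1 / N1) * ln y"
    using assms tau_pos[OF assms(1,2)] by (intro mult_strict_left_mono) (simp_all add: add_pos_pos)
  ultimately show ?thesis unfolding Sp_def by simp
qed

lemma Sp_mono:
  "0 < N1 \<Longrightarrow> 0 < N2 \<Longrightarrow> 0 < x \<Longrightarrow> x \<le> y \<Longrightarrow> y < 1 / rho N1 N2 \<Longrightarrow> Sp N1 N2 x \<le> Sp N1 N2 y"
  using Sp_strict_mono[of N1 N2 x y] by (cases "x = y") auto

lemma Sp_diff_mult_pos:
  assumes "0 < N1" "0 < N2" "0 < x" "x < 1 / rho N1 N2" "0 < y" "y < 1 / rho N1 N2" "x \<noteq> y"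
  shows "0 < (Sp N1 N2 x - Sp N1 N2 y) * (x - y)"
  using Sp_strict_mono[of N1 N2 x y] Sp_strict_mono[of N1 N2 y x] assms
  by (cases "x < y") (auto simp: mult_neg_neg)

lemma filterlim_Sp_at_right_0: "0 < N1 \<Longrightarrow> 0 < N2 \<Longrightarrow> filterlim (Sp N1 N2) at_bot (at_right 0)"
proof -
  assume N: "0 < N1" "0 < N2"
  have "((\<lambda>x. - rho N1 N2 * ln (1 - rho N1 N2 * x)) \<longlongrightarrow> - rho N1 N2 * ln (1 - rho N1 N2 * 0)) (at_right 0)"
    by (intro tendsto_intros) simp
  moreover have "filterlim (\<lambda>x. (1 / tau N1 N2 + 1 / N1) * ln x) at_bot (at_right 0)"
    using N tau_pos[OF N] by (intro filterlim_tendsto_pos_mult_at_bot[OF tendsto_const _ ln_at_0])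
      (simp add: add_pos_pos)
  ultimately show ?thesis
    unfolding Sp_def[abs_def] using filterlim_tendsto_add_at_bot_iff by (fastforce simp: add.commute)
qed

lemma filterlim_Sp_at_left_inv_rho: "0 < N1 \<Longrightarrow> 0 < N2 \<Longrightarrow> filterlim (\<lambda>\<delta>. Sp N1 N2 (1 / rho N1 N2 - \<delta>)) at_top (at_right 0)"
proof -
  assume N: "0 < N1" "0 < N2"
  define r where "r = rho N1 N2"
  have r: "0 < r" using rho_gt_1[OF N] unfolding r_def by simp
  have "((\<lambda>\<delta>. (1 / tau N1 N2 + 1 / N1) * ln (1 / r - \<delta>)) \<longlongrightarrow> (1 / tau N1 N2 + 1 / N1) * ln (1 / r - 0)) (at_right 0)"
    using r by (intro tendsto_intros) simp_all
  moreover have "filterlim (\<lambda>\<delta>. r * - ln (r * \<delta>)) at_top (at_right 0)"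
  proof (intro filterlim_tendsto_pos_mult_at_top[OF tendsto_const r])
    have "filterlim (\<lambda>\<delta>. r * \<delta>) (at_right 0) (at_right 0)"
      using r by (intro filterlim_at_withinI) (auto intro!: tendsto_eq_intros eventually_at_rightI[of 0 1])
    then have "filterlim (\<lambda>\<delta>. ln (r * \<delta>)) at_bot (at_right 0)"
      by (rule filterlim_compose[OF ln_at_0])
    then show "filterlim (\<lambda>\<delta>. - ln (r * \<delta>)) at_top (at_right 0)"
      by (simp add: filterlim_uminus_at_top)
  qed
  ultimately have "filterlim (\<lambda>\<delta>. (1 / tau N1 N2 + 1 / N1) * ln (1 / r - \<delta>) + r * - ln (r * \<delta>)) at_top (at_right 0)"
    by (rule filterlim_tendsto_add_at_top)
  moreover have "(\<lambda>\<delta>. Sp N1 N2 (1 / r - \<delta>)) = (\<lambda>\<delta>. (1 / tau N1 N2 + 1 / N1) * ln (1 / r - \<delta>) + r * - ln (r * \<delta>))"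
    unfolding Sp_def r_def[symmetric] using r by (simp add: right_diff_distrib)
  ultimately show ?thesis unfolding r_def by simp
qed

lemma Sp_boundary_layer:
  assumes "0 < N1" "0 < N2" "0 < m" "m < 1 / rho N1 N2"
  obtains \<delta> where "0 < \<delta>" "\<delta> < m" "m < 1 / rho N1 N2 - \<delta>"
    and "Sp N1 N2 \<delta> < Sp N1 N2 m - C" "Sp N1 N2 m + C < Sp N1 N2 (1 / rho N1 N2 - \<delta>)"
proof -
  have gap: "0 < 1 / rho N1 N2 - m" using assms(4) by simp
  have "\<forall>\<^sub>F \<delta> in at_right 0. 0 < \<delta> \<and> \<delta> < m \<and> \<delta> < 1 / rho N1 N2 - m
      \<and> Sp N1 N2 \<delta> < Sp N1 N2 m - C \<and> Sp N1 N2 m + C < Sp N1 N2 (1 / rho N1 N2 - \<delta>)"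
    using eventually_at_right_less[of 0]
      order_tendstoD(2)[OF tendsto_ident_at assms(3)] order_tendstoD(2)[OF tendsto_ident_at gap]
      filterlim_Sp_at_right_0[OF assms(1,2)] filterlim_Sp_at_left_inv_rho[OF assms(1,2)] assms(4)
    unfolding filterlim_at_bot_dense filterlim_at_top_dense
    by (auto intro!: eventually_conj)
  then obtain \<delta> where "0 < \<delta> \<and> \<delta> < m \<and> \<delta> < 1 / rho N1 N2 - m
      \<and> Sp N1 N2 \<delta> < Sp N1 N2 m - C \<and> Sp N1 N2 m + C < Sp N1 N2 (1 / rho N1 N2 - \<delta>)"
    using eventually_happens by force
  then show ?thesis using that by auto
qed

section \<open>The chemical potential and uniqueness\<close>

text \<open>\<open>kappa_pot h \<phi>\<close> is the contribution of the x-edges to the chemical potential; the y-edges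
  contribute \<open>kappa_pot\<close> of the transposed grid function, see \<open>kappa_pot_transpose\<close>.\<close>

definition kappa_pot :: "real \<Rightarrow> gridfun \<Rightarrow> gridfun" where
  "kappa_pot h \<phi> i j = kappap (\<phi> i j) * ax (\<lambda>a b. (Dx h \<phi> a b)\<^sup>2) i j
     - 2 * dx h (\<lambda>a b. Ax (\<lambda>c d. kappa (\<phi> c d)) a b * Dx h \<phi> a b) i j"

lemma kappa_pot_transpose:
  "kappap (\<phi> i j) * ay (\<lambda>a b. (Dy h \<phi> a b)\<^sup>2) i j
     - 2 * dy h (\<lambda>a b. Ay (\<lambda>c d. kappa (\<phi> c d)) a b * Dy h \<phi> a b) i j
   = kappa_pot h (\<lambda>a b. \<phi> b a) j i"
  unfolding kappa_pot_def ax_def ay_def Dx_def Dy_def Ax_def Ay_def dx_def dy_def by simp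

lemma periodic_kappa_flux:
  "periodic N \<phi> \<Longrightarrow> periodic N (\<lambda>a b. Ax (\<lambda>c d. kappa (\<phi> c d)) a b * Dx h \<phi> a b)"
  by (rule periodic_compose2[OF periodic_Ax[OF periodic_compose] periodic_Dx])

lemma periodic_kappa_pot: "periodic N \<phi> \<Longrightarrow> periodic N (kappa_pot h \<phi>)"
  unfolding kappa_pot_def[abs_def]
  by (rule periodic_compose3[OF _ periodic_ax[OF periodic_compose[OF periodic_Dx]] periodic_dx[OF periodic_kappa_flux]])

lemma grid_sum_kappa_pot:
  assumes "periodic N \<phi>" "periodic N w"
  shows "grid_sum N (\<lambda>i j. kappa_pot h \<phi> i j * w i j)
    = grid_sum N (\<lambda>i j. edge_energy_deriv h (\<phi> i j) (\<phi> (i + 1) j) (w i j) (w (i + 1) j))"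
proof -
  let ?K = "\<lambda>a b. Ax (\<lambda>c d. kappa (\<phi> c d)) a b * Dx h \<phi> a b"
  have "grid_sum N (\<lambda>i j. kappap (\<phi> i j) * w i j * ax (\<lambda>a b. (Dx h \<phi> a b)\<^sup>2) i j)
      = grid_sum N (\<lambda>i j. Ax (\<lambda>a b. kappap (\<phi> a b) * w a b) i j * (Dx h \<phi> i j)\<^sup>2)"
    by (rule grid_sum_mult_ax[OF periodic_compose2[OF assms] periodic_compose[OF periodic_Dx[OF assms(1)]]])
  moreover have "grid_sum N (\<lambda>i j. w i j * dx h ?K i j) = - grid_sum N (\<lambda>i j. Dx h w i j * ?K i j)"
    by (rule grid_sum_mult_dx[OF assms(2) periodic_kappa_flux[OF assms(1)]])
  ultimately have "grid_sum N (\<lambda>i j. kappa_pot h \<phi> i j * w i j)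
      = grid_sum N (\<lambda>i j. Ax (\<lambda>a b. kappap (\<phi> a b) * w a b) i j * (Dx h \<phi> i j)\<^sup>2 + 2 * (Dx h w i j * ?K i j))"
    unfolding kappa_pot_def by (simp add: algebra_simps grid_sum_add grid_sum_diff grid_sum_cmult)
  also have "\<dots> = grid_sum N (\<lambda>i j. edge_energy_deriv h (\<phi> i j) (\<phi> (i + 1) j) (w i j) (w (i + 1) j))"
  proof -
    have "2 * (x * (k / 2 * y)) = k * y * x" for x y k :: real by simp
    then show ?thesis by (intro grid_sum_cong) (simp add: edge_energy_deriv_def Ax_def Dx_def add.commute)
  qed
  finally show ?thesis .
qed

lemma grid_sum_kappa_pot_transpose:
  assumes "periodic N \<phi>" "periodic N w"
  shows "grid_sum N (\<lambda>i j. kappa_pot h (\<lambda>a b. \<phi> b a) j i * w i j)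
    = grid_sum N (\<lambda>i j. edge_energy_deriv h (\<phi> i j) (\<phi> i (j + 1)) (w i j) (w i (j + 1)))"
proof -
  have "grid_sum N (\<lambda>i j. kappa_pot h (\<lambda>a b. \<phi> b a) j i * w i j)
      = grid_sum N (\<lambda>i j. kappa_pot h (\<lambda>a b. \<phi> b a) i j * w j i)"
    by (rule grid_sum_transpose)
  also have "\<dots> = grid_sum N (\<lambda>i j. edge_energy_deriv h (\<phi> j i) (\<phi> j (i + 1)) (w j i) (w j (i + 1)))"
    using grid_sum_kappa_pot[OF periodic_transpose periodic_transpose, OF assms] by simp
  also have "\<dots> = grid_sum N (\<lambda>i j. edge_energy_deriv h (\<phi> i j) (\<phi> i (j + 1)) (w i j) (w i (j + 1)))"
    by (rule grid_sum_transpose)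
  finally show ?thesis .
qed

definition chem_pot ::
    "real \<Rightarrow> real \<Rightarrow> real \<Rightarrow> real \<Rightarrow> real \<Rightarrow> real \<Rightarrow> gridfun \<Rightarrow> gridfun \<Rightarrow> gridfun \<Rightarrow> gridfun" where
  "chem_pot N1 N2 \<chi> h dt A p q \<phi> i j =
     Sp N1 N2 (\<phi> i j) + kappa_pot h \<phi> i j + kappa_pot h (\<lambda>a b. \<phi> b a) j i
     + Hp N1 N2 \<chi> (2 * p i j - q i j) - A * dt * lap h (\<lambda>a b. \<phi> a b - p a b) i j"

lemma scheme_iff:
  "scheme N1 N2 \<chi> h dt A p q \<phi> \<mu> \<longleftrightarrow>
     (\<forall>i j. (3 * \<phi> i j - 4 * p i j + q i j) / (2 * dt) = lap h \<mu> i j) \<and> \<mu> = chem_pot N1 N2 \<chi> h dt A p q \<phi>"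
proof -
  have "chem_pot N1 N2 \<chi> h dt A p q \<phi> i j =
     Sp N1 N2 (\<phi> i j)
        + kappap (\<phi> i j) * (ax (\<lambda>a b. (Dx h \<phi> a b)\<^sup>2) i j + ay (\<lambda>a b. (Dy h \<phi> a b)\<^sup>2) i j)
        - 2 * dx h (\<lambda>a b. Ax (\<lambda>c d. kappa (\<phi> c d)) a b * Dx h \<phi> a b) i j
        - 2 * dy h (\<lambda>a b. Ay (\<lambda>c d. kappa (\<phi> c d)) a b * Dy h \<phi> a b) i j
        + Hp N1 N2 \<chi> (2 * p i j - q i j)
        - A * dt * lap h (\<lambda>a b. \<phi> a b - p a b) i j" for i j
    using kappa_pot_transpose[of \<phi> i j h] unfolding chem_pot_def kappa_pot_def[of h \<phi>]
    by (simp add: algebra_simps)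
  then show ?thesis unfolding scheme_def fun_eq_iff by simp
qed

lemma periodic_chem_pot:
  "periodic N \<phi> \<Longrightarrow> periodic N p \<Longrightarrow> periodic N q \<Longrightarrow> periodic N (chem_pot N1 N2 \<chi> h dt A p q \<phi>)"
proof -
  assume per: "periodic N \<phi>" "periodic N p" "periodic N q"
  have "periodic N (\<lambda>i j. Sp N1 N2 (\<phi> i j) + kappa_pot h \<phi> i j + kappa_pot h (\<lambda>a b. \<phi> b a) j i)"
    by (rule periodic_compose3[OF per(1) periodic_kappa_pot periodic_transpose[OF periodic_kappa_pot]])
      (use per in \<open>simp_all add: periodic_transpose\<close>)
  moreover have "periodic N (lap h (\<lambda>a b. \<phi> a b - p a b))"
    by (rule periodic_lap[OF periodic_compose2[OF per(1,2)]])
  ultimately show ?thesis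
    unfolding chem_pot_def[abs_def] by (rule periodic_compose3[OF _ periodic_compose2[OF per(2,3)]])
qed

lemma chem_pot_monotone:
  assumes "periodic N \<phi>1" "periodic N \<phi>2" "0 < h" "0 \<le> A * dt"
    and "\<And>i j. 0 < \<phi>1 i j \<and> \<phi>1 i j < 1" "\<And>i j. 0 < \<phi>2 i j \<and> \<phi>2 i j < 1"
  shows "grid_sum N (\<lambda>i j. (Sp N1 N2 (\<phi>1 i j) - Sp N1 N2 (\<phi>2 i j)) * (\<phi>1 i j - \<phi>2 i j))
    \<le> grid_sum N (\<lambda>i j. (chem_pot N1 N2 \<chi> h dt A p q \<phi>1 i j - chem_pot N1 N2 \<chi> h dt A p q \<phi>2 i j)
                          * (\<phi>1 i j - \<phi>2 i j))"
proof -
  define w where "w i j = \<phi>1 i j - \<phi>2 i j" for i j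
  have pw: "periodic N w" unfolding w_def[abs_def] using assms(1,2) by (rule periodic_compose2)
  have x: "0 \<le> grid_sum N (\<lambda>i j. kappa_pot h \<phi>1 i j * w i j) - grid_sum N (\<lambda>i j. kappa_pot h \<phi>2 i j * w i j)"
    unfolding grid_sum_kappa_pot[OF assms(1) pw] grid_sum_kappa_pot[OF assms(2) pw] grid_sum_diff[symmetric]
    unfolding w_def using assms(3,5,6) by (intro grid_sum_nonneg edge_energy_deriv_monotone) auto
  have y: "0 \<le> grid_sum N (\<lambda>i j. kappa_pot h (\<lambda>a b. \<phi>1 b a) j i * w i j)
      - grid_sum N (\<lambda>i j. kappa_pot h (\<lambda>a b. \<phi>2 b a) j i * w i j)"
    unfolding grid_sum_kappa_pot_transpose[OF assms(1) pw] grid_sum_kappa_pot_transpose[OF assms(2) pw]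
      grid_sum_diff[symmetric]
    unfolding w_def using assms(3,5,6) by (intro grid_sum_nonneg edge_energy_deriv_monotone) auto
  have lap: "0 \<le> - grid_sum N (\<lambda>i j. lap h w i j * w i j)"
    using grid_sum_mult_lap[OF pw pw] by (simp add: mult.commute grid_sum_nonneg)
  have "(chem_pot N1 N2 \<chi> h dt A p q \<phi>1 i j - chem_pot N1 N2 \<chi> h dt A p q \<phi>2 i j) * w i j
      = (Sp N1 N2 (\<phi>1 i j) - Sp N1 N2 (\<phi>2 i j)) * w i j
        + (kappa_pot h \<phi>1 i j * w i j - kappa_pot h \<phi>2 i j * w i j)
        + (kappa_pot h (\<lambda>a b. \<phi>1 b a) j i * w i j - kappa_pot h (\<lambda>a b. \<phi>2 b a) j i * w i j)
        - A * dt * (lap h w i j * w i j)" for i j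
  proof -
    have "lap h (\<lambda>a b. \<phi>1 a b - p a b) i j = lap h w i j + lap h (\<lambda>a b. \<phi>2 a b - p a b) i j"
      unfolding w_def lap_diff by simp
    then show ?thesis unfolding chem_pot_def by (simp add: algebra_simps)
  qed
  then have "grid_sum N (\<lambda>i j. (chem_pot N1 N2 \<chi> h dt A p q \<phi>1 i j - chem_pot N1 N2 \<chi> h dt A p q \<phi>2 i j) * w i j)
      = grid_sum N (\<lambda>i j. (Sp N1 N2 (\<phi>1 i j) - Sp N1 N2 (\<phi>2 i j)) * w i j)
        + (grid_sum N (\<lambda>i j. kappa_pot h \<phi>1 i j * w i j) - grid_sum N (\<lambda>i j. kappa_pot h \<phi>2 i j * w i j))
        + (grid_sum N (\<lambda>i j. kappa_pot h (\<lambda>a b. \<phi>1 b a) j i * w i j)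
           - grid_sum N (\<lambda>i j. kappa_pot h (\<lambda>a b. \<phi>2 b a) j i * w i j))
        + A * dt * (- grid_sum N (\<lambda>i j. lap h w i j * w i j))"
    by (simp add: grid_sum_add grid_sum_diff grid_sum_cmult)
  moreover have "0 \<le> A * dt * (- grid_sum N (\<lambda>i j. lap h w i j * w i j))"
    using assms(4) lap by (simp add: mult_nonneg_nonpos)
  ultimately show ?thesis using x y unfolding w_def by linarith
qed

definition scheme_solution ::
    "nat \<Rightarrow> real \<Rightarrow> real \<Rightarrow> real \<Rightarrow> real \<Rightarrow> real \<Rightarrow> real \<Rightarrow> gridfun \<Rightarrow> gridfun \<Rightarrow> gridfun \<Rightarrow> gridfun \<Rightarrow> bool"
  where
  "scheme_solution N N1 N2 \<chi> h dt A p q \<phi> \<mu> \<longleftrightarrow>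
     periodic N \<phi> \<and> periodic N \<mu> \<and> (\<forall>i j. 0 < \<phi> i j \<and> \<phi> i j < 1 / rho N1 N2)
     \<and> scheme N1 N2 \<chi> h dt A p q \<phi> \<mu>"

lemma scheme_mass:
  assumes "periodic N \<mu>" "scheme N1 N2 \<chi> h dt A p q \<phi> \<mu>" "0 < dt"
  shows "3 * grid_sum N \<phi> - 4 * grid_sum N p + grid_sum N q = 0"
proof -
  have "grid_sum N (\<lambda>i j. (3 * \<phi> i j - 4 * p i j + q i j) / (2 * dt)) = grid_sum N (lap h \<mu>)"
    using assms(2) unfolding scheme_def by simp
  then show ?thesis using grid_sum_lap[OF assms(1)] assms(3)
    by (simp add: grid_sum_divide grid_sum_add grid_sum_diff grid_sum_cmult)
qed

lemma scheme_solution_unique: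
  assumes "0 < N1" "0 < N2" "0 < dt" "0 < A" "0 < h" "0 < N"
    and sol1: "scheme_solution N N1 N2 \<chi> h dt A p q \<phi>1 \<mu>1"
    and sol2: "scheme_solution N N1 N2 \<chi> h dt A p q \<phi>2 \<mu>2"
  shows "\<phi>1 = \<phi>2 \<and> \<mu>1 = \<mu>2"
proof -
  have per: "periodic N \<phi>1" "periodic N \<mu>1" "periodic N \<phi>2" "periodic N \<mu>2"
    and range: "\<And>i j. 0 < \<phi>1 i j \<and> \<phi>1 i j < 1 / rho N1 N2" "\<And>i j. 0 < \<phi>2 i j \<and> \<phi>2 i j < 1 / rho N1 N2"
    and eq1: "\<And>i j. (3 * \<phi>1 i j - 4 * p i j + q i j) / (2 * dt) = lap h \<mu>1 i j"
    and eq2: "\<And>i j. (3 * \<phi>2 i j - 4 * p i j + q i j) / (2 * dt) = lap h \<mu>2 i j"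
    and mu: "\<mu>1 = chem_pot N1 N2 \<chi> h dt A p q \<phi>1" "\<mu>2 = chem_pot N1 N2 \<chi> h dt A p q \<phi>2"
    using sol1 sol2 unfolding scheme_solution_def scheme_iff by auto
  have "1 / rho N1 N2 < 1" using rho_gt_1[OF assms(1,2)] by simp
  then have unit: "\<And>i j. 0 < \<phi>1 i j \<and> \<phi>1 i j < 1" "\<And>i j. 0 < \<phi>2 i j \<and> \<phi>2 i j < 1"
    using range by (meson order.strict_trans)+
  define v where "v i j = \<mu>1 i j - \<mu>2 i j" for i j
  have pv: "periodic N v" unfolding v_def[abs_def] using per(2,4) by (rule periodic_compose2)
  have diff: "\<phi>1 i j - \<phi>2 i j = 2 * dt / 3 * lap h v i j" for i j
    using eq1[of i j] eq2[of i j] assms(3) unfolding v_def lap_diff by (simp add: field_simps)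
  have "grid_sum N (\<lambda>i j. v i j * (\<phi>1 i j - \<phi>2 i j)) = 2 * dt / 3 * grid_sum N (\<lambda>i j. v i j * lap h v i j)"
    unfolding diff by (simp add: grid_sum_cmult[symmetric] mult_ac)
  also have "\<dots> = - (2 * dt / 3) * grid_sum N (\<lambda>i j. (Dx h v i j)\<^sup>2 + (Dy h v i j)\<^sup>2)"
    unfolding grid_sum_mult_lap[OF pv pv] by (simp add: power2_eq_square)
  also have "\<dots> \<le> 0" using assms(3) by (simp add: grid_sum_nonneg)
  finally have "grid_sum N (\<lambda>i j. (Sp N1 N2 (\<phi>1 i j) - Sp N1 N2 (\<phi>2 i j)) * (\<phi>1 i j - \<phi>2 i j)) \<le> 0"
    using chem_pot_monotone[OF per(1,3) assms(5) _ unit, of A dt N1 N2 \<chi> p q] assms(3,4)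
    unfolding v_def mu by simp
  moreover have nonneg: "0 \<le> (Sp N1 N2 (\<phi>1 i j) - Sp N1 N2 (\<phi>2 i j)) * (\<phi>1 i j - \<phi>2 i j)" for i j
    using Sp_diff_mult_pos[OF assms(1,2)] range by (cases "\<phi>1 i j = \<phi>2 i j") (auto intro: less_imp_le)
  ultimately have zero: "(Sp N1 N2 (\<phi>1 i j) - Sp N1 N2 (\<phi>2 i j)) * (\<phi>1 i j - \<phi>2 i j) = 0"
    if "i \<in> {1..int N}" "j \<in> {1..int N}" for i j
    using that by (intro grid_sum_nonneg_eq_0[where N = N]) auto
  have "\<phi>1 = \<phi>2"
  proof (rule periodic_eqI[OF assms(6) per(1,3)])
    fix i j assume "i \<in> {1..int N}" "j \<in> {1..int N}"
    then show "\<phi>1 i j = \<phi>2 i j"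
      using zero[of i j] Sp_diff_mult_pos[OF assms(1,2), of "\<phi>1 i j" "\<phi>2 i j"] range[of i j] by fastforce
  qed
  then show ?thesis using mu by simp
qed

section \<open>The discrete Poisson equation\<close>

definition perturb :: "gridfun \<Rightarrow> real \<Rightarrow> gridfun \<Rightarrow> gridfun" where
  "perturb \<phi> s \<eta> = (\<lambda>i j. \<phi> i j + s * \<eta> i j)"

lemma perturb_0 [simp]: "perturb \<phi> 0 \<eta> = \<phi>"
  unfolding perturb_def by simp

lemma periodic_perturb: "periodic N \<phi> \<Longrightarrow> periodic N \<eta> \<Longrightarrow> periodic N (perturb \<phi> s \<eta>)"
  unfolding perturb_def by (rule periodic_compose2)

lemma min_directional_deriv_eq_0:
  fixes J :: "gridfun \<Rightarrow> real"
  assumes "\<forall>\<psi>\<in>K. J \<phi> \<le> J \<psi>" "DERIV (\<lambda>s. J (perturb \<phi> s \<eta>)) 0 :> l"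
    and "0 < d" "\<And>s. \<bar>s\<bar> < d \<Longrightarrow> perturb \<phi> s \<eta> \<in> K"
  shows "l = 0"
  by (rule DERIV_local_min[OF assms(2,3)]) (use assms(1,4) in auto)

lemma min_directional_deriv_nonneg:
  fixes J :: "gridfun \<Rightarrow> real"
  assumes "\<forall>\<psi>\<in>K. J \<phi> \<le> J \<psi>" "DERIV (\<lambda>s. J (perturb \<phi> s \<eta>)) 0 :> l"
    and "0 < d" "\<And>s. 0 < s \<Longrightarrow> s < d \<Longrightarrow> perturb \<phi> s \<eta> \<in> K"
  shows "0 \<le> l"
proof (rule ccontr)
  assume "\<not> 0 \<le> l"
  then obtain e where e: "0 < e" "\<And>s. 0 < s \<Longrightarrow> s < e \<Longrightarrow> J (perturb \<phi> s \<eta>) < J \<phi>"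
    using DERIV_neg_dec_right[OF assms(2)] by force
  define s where "s = min e d / 2"
  have "0 < s" "s < e" "s < d" unfolding s_def using e(1) assms(3) by auto
  then show False using e(2) assms(1,4) by fastforce
qed

lemma continuous_on_grid_eval [continuous_intros]: "continuous_on S (\<lambda>\<phi>::gridfun. \<phi> i j)"
proof -
  have row: "continuous_on UNIV (\<lambda>\<phi>::gridfun. \<phi> i)" and entry: "continuous_on UNIV (\<lambda>g::int \<Rightarrow> real. g j)"
    by simp_all
  have "continuous_on UNIV ((\<lambda>g::int \<Rightarrow> real. g j) \<circ> (\<lambda>\<phi>::gridfun. \<phi> i))"
    by (rule continuous_on_compose[OF row continuous_on_subset[OF entry]]) simp
  then show ?thesis unfolding comp_def by (rule continuous_on_subset) simp
qed

lemma continuous_on_grid_sum [continuous_intros]: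
  "(\<And>i j. continuous_on S (\<lambda>\<phi>. F \<phi> i j)) \<Longrightarrow> continuous_on S (\<lambda>\<phi>. grid_sum N (F \<phi>))"
  unfolding grid_sum_def by (intro continuous_intros)

lemma compact_grid_box: "compact {\<phi>::gridfun. \<forall>i j. a \<le> \<phi> i j \<and> \<phi> i j \<le> b}"
proof -
  have row: "compact (PiE (UNIV::int set) (\<lambda>_. {a..b::real}))"
    using compactin_PiE[of "\<lambda>_. euclidean" UNIV "\<lambda>_. {a..b::real}"] by (simp add: euclidean_product_topology)
  have "compact (PiE (UNIV::int set) (\<lambda>_. PiE (UNIV::int set) (\<lambda>_. {a..b::real})))"
    using compactin_PiE[of "\<lambda>_. euclidean" UNIV "\<lambda>_. PiE (UNIV::int set) (\<lambda>_. {a..b::real})"] row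
    by (simp add: euclidean_product_topology)
  moreover have "PiE UNIV (\<lambda>_. PiE UNIV (\<lambda>_. {a..b})) = {\<phi>::gridfun. \<forall>i j. a \<le> \<phi> i j \<and> \<phi> i j \<le> b}"
    by (auto simp: PiE_iff)
  ultimately show ?thesis by simp
qed

lemma closed_periodic: "closed {\<phi>. periodic N \<phi>}"
  unfolding periodic_def
  by (intro closed_Collect_all closed_Collect_conj closed_Collect_eq continuous_intros)

lemma abs_diff_le_sum_steps:
  fixes f :: "int \<Rightarrow> real"
  assumes "x \<in> {1..int N}"
  shows "\<bar>f x - f 1\<bar> \<le> (\<Sum>i\<in>{1..int N}. \<bar>f (i + 1) - f i\<bar>)"
proof -
  have "\<bar>f (1 + int k) - f 1\<bar> \<le> (\<Sum>i\<in>{1..int k}. \<bar>f (i + 1) - f i\<bar>)" for k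
  proof (induction k)
    case (Suc k)
    have "{1..int (Suc k)} = insert (int k + 1) {1..int k}" by auto
    then show ?case using Suc by (simp add: add.commute)
  qed simp
  from this[of "nat (x - 1)"] have "\<bar>f x - f 1\<bar> \<le> (\<Sum>i\<in>{1..x - 1}. \<bar>f (i + 1) - f i\<bar>)"
    using assms by simp
  also have "\<dots> \<le> (\<Sum>i\<in>{1..int N}. \<bar>f (i + 1) - f i\<bar>)"
    using assms by (intro sum_mono2) auto
  finally show ?thesis .
qed

lemma discrete_poincare:
  assumes "0 < h" "x \<in> {1..int N}" "y \<in> {1..int N}"
  shows "(\<psi> x y - \<psi> 1 1)\<^sup>2 \<le> 2 * h\<^sup>2 * (real N)\<^sup>2 * grid_sum N (\<lambda>i j. (Dx h \<psi> i j)\<^sup>2 + (Dy h \<psi> i j)\<^sup>2)"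
proof -
  define X Y where "X = grid_sum N (\<lambda>i j. \<bar>Dx h \<psi> i j\<bar>)" and "Y = grid_sum N (\<lambda>i j. \<bar>Dy h \<psi> i j\<bar>)"
  have one: "1 \<in> {1..int N}" using assms(2) by simp
  have "\<bar>\<psi> x 1 - \<psi> 1 1\<bar> \<le> (\<Sum>i\<in>{1..int N}. \<bar>\<psi> (i + 1) 1 - \<psi> i 1\<bar>)"
    using abs_diff_le_sum_steps[OF assms(2), of "\<lambda>i. \<psi> i 1"] .
  also have "\<dots> = h * (\<Sum>i\<in>{1..int N}. \<bar>Dx h \<psi> i 1\<bar>)"
    unfolding Dx_def sum_distrib_left using assms(1) by (intro sum.cong) auto
  also have "\<dots> \<le> h * X"
    unfolding X_def grid_sum_def using assms(1) one
    by (intro mult_left_mono sum_mono member_le_sum) auto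
  finally have "\<bar>\<psi> x 1 - \<psi> 1 1\<bar> \<le> h * X" .
  moreover have "\<bar>\<psi> x y - \<psi> x 1\<bar> \<le> (\<Sum>j\<in>{1..int N}. \<bar>\<psi> x (j + 1) - \<psi> x j\<bar>)"
    using abs_diff_le_sum_steps[OF assms(3), of "\<lambda>j. \<psi> x j"] .
  moreover have "\<dots> = h * (\<Sum>j\<in>{1..int N}. \<bar>Dy h \<psi> x j\<bar>)"
    unfolding Dy_def sum_distrib_left using assms(1) by (intro sum.cong) auto
  moreover have "\<dots> \<le> h * Y"
    unfolding Y_def grid_sum_def using assms(1,2)
    by (intro mult_left_mono member_le_sum[of x, where f = "\<lambda>i. \<Sum>j\<in>{1..int N}. \<bar>Dy h \<psi> i j\<bar>"])
      (auto intro: sum_nonneg)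
  ultimately have "\<bar>\<psi> x y - \<psi> 1 1\<bar> \<le> h * (X + Y)" by (simp add: algebra_simps)
  then have "(\<psi> x y - \<psi> 1 1)\<^sup>2 \<le> (h * (X + Y))\<^sup>2"
    by (metis abs_ge_zero power2_abs power_mono)
  also have "\<dots> \<le> h\<^sup>2 * (2 * (X\<^sup>2 + Y\<^sup>2))"
  proof -
    have "0 \<le> (X - Y)\<^sup>2" by simp
    then have "(X + Y)\<^sup>2 \<le> 2 * (X\<^sup>2 + Y\<^sup>2)" by (simp add: power2_eq_square algebra_simps)
    then show ?thesis unfolding power_mult_distrib by (intro mult_left_mono) simp_all
  qed
  also have "\<dots> \<le> h\<^sup>2 * (2 * ((real N)\<^sup>2 * grid_sum N (\<lambda>i j. (Dx h \<psi> i j)\<^sup>2)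
      + (real N)\<^sup>2 * grid_sum N (\<lambda>i j. (Dy h \<psi> i j)\<^sup>2)))"
    using grid_sum_sq_le[of N "\<lambda>i j. \<bar>Dx h \<psi> i j\<bar>"] grid_sum_sq_le[of N "\<lambda>i j. \<bar>Dy h \<psi> i j\<bar>"]
    unfolding X_def Y_def by (intro mult_left_mono) simp_all
  finally show ?thesis by (simp add: grid_sum_add algebra_simps)
qed

definition poisson_energy :: "nat \<Rightarrow> real \<Rightarrow> gridfun \<Rightarrow> gridfun \<Rightarrow> real" where
  "poisson_energy N h b \<psi> =
     grid_sum N (\<lambda>i j. (Dx h \<psi> i j)\<^sup>2 + (Dy h \<psi> i j)\<^sup>2) / 2 + grid_sum N (\<lambda>i j. b i j * \<psi> i j)"

lemma DERIV_poisson_energy: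
  assumes "periodic N \<psi>" "periodic N \<eta>"
  shows "DERIV (\<lambda>s. poisson_energy N h b (perturb \<psi> s \<eta>)) 0
    :> grid_sum N (\<lambda>i j. (b i j - lap h \<psi> i j) * \<eta> i j)"
proof -
  have D: "Dx h (perturb \<psi> s \<eta>) i j = Dx h \<psi> i j + s * Dx h \<eta> i j"
    "Dy h (perturb \<psi> s \<eta>) i j = Dy h \<psi> i j + s * Dy h \<eta> i j" for s i j
    unfolding Dx_def Dy_def perturb_def by (simp_all add: divide_inverse algebra_simps)
  have deriv: "DERIV (\<lambda>s. poisson_energy N h b (perturb \<psi> s \<eta>)) 0
    :> grid_sum N (\<lambda>i j. 2 * (Dx h \<psi> i j * Dx h \<eta> i j + Dy h \<psi> i j * Dy h \<eta> i j)) / 2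
       + grid_sum N (\<lambda>i j. b i j * \<eta> i j)"
    unfolding poisson_energy_def D unfolding perturb_def
    by (intro DERIV_add DERIV_cdivide grid_sum_DERIV) (auto intro!: derivative_eq_intros simp: algebra_simps)
  have "grid_sum N (\<lambda>i j. Dx h \<psi> i j * Dx h \<eta> i j + Dy h \<psi> i j * Dy h \<eta> i j)
      = - grid_sum N (\<lambda>i j. lap h \<psi> i j * \<eta> i j)"
    using grid_sum_mult_lap[OF assms(2,1), of h] by (simp add: mult.commute)
  then have "grid_sum N (\<lambda>i j. 2 * (Dx h \<psi> i j * Dx h \<eta> i j + Dy h \<psi> i j * Dy h \<eta> i j)) / 2
       + grid_sum N (\<lambda>i j. b i j * \<eta> i j) = grid_sum N (\<lambda>i j. (b i j - lap h \<psi> i j) * \<eta> i j)"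
    unfolding grid_sum_cmult by (simp add: grid_sum_diff left_diff_distrib)
  with deriv show ?thesis by simp
qed

lemma poisson_energy_pos:
  assumes "0 < h" "0 < N" "x \<in> {1..int N}" "y \<in> {1..int N}"
    and "R = 4 * h\<^sup>2 * (real N)\<^sup>2 * (grid_sum N (\<lambda>i j. \<bar>b i j\<bar>) + 1)"
    and "\<psi> 1 1 = 0" "\<And>i j. \<bar>\<psi> i j\<bar> \<le> R" "R \<le> \<bar>\<psi> x y\<bar>"
  shows "0 < poisson_energy N h b \<psi>"
proof -
  define B G where "B = grid_sum N (\<lambda>i j. \<bar>b i j\<bar>)"
    and "G = grid_sum N (\<lambda>i j. (Dx h \<psi> i j)\<^sup>2 + (Dy h \<psi> i j)\<^sup>2)"
  have c: "0 < 2 * h\<^sup>2 * (real N)\<^sup>2" using assms(1,2) by simp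
  have "0 \<le> B" unfolding B_def by (rule grid_sum_nonneg) simp
  then have R: "0 < R" using assms(5) c unfolding B_def by simp
  have "2 * h\<^sup>2 * (real N)\<^sup>2 * (R * (2 * (B + 1))) = R\<^sup>2"
    unfolding B_def assms(5) by (simp add: power2_eq_square algebra_simps)
  also have "\<dots> \<le> (\<psi> x y - \<psi> 1 1)\<^sup>2"
    using power_mono[OF assms(8), of 2] R assms(6) by simp
  also have "\<dots> \<le> 2 * h\<^sup>2 * (real N)\<^sup>2 * G"
    unfolding G_def by (rule discrete_poincare[OF assms(1,3,4)])
  finally have G: "R * (2 * (B + 1)) \<le> G"
    using c by (simp only: mult_le_cancel_left_pos)
  have "\<bar>grid_sum N (\<lambda>i j. b i j * \<psi> i j)\<bar> \<le> grid_sum N (\<lambda>i j. \<bar>b i j\<bar> * R)"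
    by (rule order_trans[OF grid_sum_abs grid_sum_mono])
      (simp add: abs_mult mult_left_mono assms(7))
  then have "\<bar>grid_sum N (\<lambda>i j. b i j * \<psi> i j)\<bar> \<le> B * R"
    unfolding B_def grid_sum_multc .
  then show ?thesis unfolding poisson_energy_def G_def[symmetric] using G R by (simp add: algebra_simps abs_le_iff)
qed

lemma poisson_minimizer_lap_eq:
  assumes per: "periodic N \<psi>"
    and K: "K = {\<psi>. \<forall>i j. - R \<le> \<psi> i j \<and> \<psi> i j \<le> R} \<inter> {\<psi>. periodic N \<psi>} \<inter> {\<psi>. \<psi> 1 1 = 0}"
    and min: "\<forall>\<chi>\<in>K. poisson_energy N h b \<psi> \<le> poisson_energy N h b \<chi>"
    and margin: "\<And>i j. \<bar>\<psi> i j\<bar> \<le> M" "M < R" "\<psi> 1 1 = 0"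
    and ac: "a \<in> {1..int N}" "c \<in> {1..int N}" "(a, c) \<noteq> (1, 1)"
  shows "lap h \<psi> a c = b a c"
proof -
  have "perturb \<psi> s (delta_at N a c) \<in> K" if "\<bar>s\<bar> < R - M" for s
  proof -
    have "\<bar>perturb \<psi> s (delta_at N a c) i j\<bar> \<le> R" for i j
      using margin(1)[of i j] that unfolding perturb_def delta_at_def by auto
    then have "- R \<le> perturb \<psi> s (delta_at N a c) i j \<and> perturb \<psi> s (delta_at N a c) i j \<le> R" for i j
      by (simp add: abs_le_iff) (metis minus_le_iff)
    moreover have "perturb \<psi> s (delta_at N a c) 1 1 = 0"
      using margin(3) ac unfolding perturb_def delta_at_def by (auto simp: period_rep_id)
    ultimately show ?thesis
      unfolding K using periodic_perturb[OF per periodic_delta_at] by blast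
  qed
  then have "grid_sum N (\<lambda>i j. (b i j - lap h \<psi> i j) * delta_at N a c i j) = 0"
    using margin(2) by (intro min_directional_deriv_eq_0[OF min DERIV_poisson_energy[OF per periodic_delta_at]])
      auto
  then show ?thesis using grid_sum_mult_delta_at[OF ac(1,2)] by simp
qed

lemma discrete_poisson_solvable:
  assumes "0 < h" "0 < N" "periodic N b" "grid_sum N b = 0"
  shows "\<exists>\<psi>. periodic N \<psi> \<and> lap h \<psi> = b"
proof -
  define R where "R = 4 * h\<^sup>2 * (real N)\<^sup>2 * (grid_sum N (\<lambda>i j. \<bar>b i j\<bar>) + 1)"
  define K where "K = {\<psi>. \<forall>i j. - R \<le> \<psi> i j \<and> \<psi> i j \<le> R} \<inter> {\<psi>. periodic N \<psi>} \<inter> {\<psi>. \<psi> 1 1 = 0}"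
  have "compact K" unfolding K_def
    by (intro compact_Int_closed compact_grid_box closed_periodic closed_Collect_eq continuous_intros)
  moreover have "0 \<le> R" unfolding R_def by (simp add: grid_sum_nonneg)
  then have zero: "(\<lambda>i j. 0) \<in> K" unfolding K_def by (simp add: periodic_const)
  moreover have "continuous_on K (poisson_energy N h b)"
    unfolding poisson_energy_def Dx_def Dy_def using assms(1) by (intro continuous_intros) auto
  ultimately obtain \<psi> where "\<psi> \<in> K" and min: "\<forall>\<chi>\<in>K. poisson_energy N h b \<psi> \<le> poisson_energy N h b \<chi>"
    using continuous_attains_inf by blast
  then have per: "periodic N \<psi>" and \<psi>11: "\<psi> 1 1 = 0" and bounds: "\<forall>i j. - R \<le> \<psi> i j \<and> \<psi> i j \<le> R"
    unfolding K_def by auto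
  have box: "\<bar>\<psi> i j\<bar> \<le> R" for i j using bounds[rule_format, of i j] by (simp add: abs_le_iff)
  have "poisson_energy N h b \<psi> \<le> 0"
    using min zero by (force simp: poisson_energy_def Dx_def Dy_def grid_sum_def)
  have inner: "\<bar>\<psi> x y\<bar> < R" if "x \<in> {1..int N}" "y \<in> {1..int N}" for x y
  proof (rule ccontr)
    assume "\<not> \<bar>\<psi> x y\<bar> < R"
    then have "0 < poisson_energy N h b \<psi>"
      by (intro poisson_energy_pos[where \<psi> = \<psi>, OF assms(1,2) that R_def \<psi>11]) (use box in auto)
    with \<open>poisson_energy N h b \<psi> \<le> 0\<close> show False by simp
  qed
  obtain x0 y0 where "x0 \<in> {1..int N}" "y0 \<in> {1..int N}" and max: "\<And>x y. \<bar>\<psi> x y\<bar> \<le> \<bar>\<psi> x0 y0\<bar>"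
    using periodic_attains_max[OF assms(2) periodic_compose[OF per]] by blast
  then have el: "lap h \<psi> a c = b a c" if "a \<in> {1..int N}" "c \<in> {1..int N}" "(a, c) \<noteq> (1, 1)" for a c
    using inner by (intro poisson_minimizer_lap_eq[OF per K_def min max _ \<psi>11 that]) auto
  txt \<open>At the pinned point the equation follows from both sides having mean zero.\<close>
  have one: "(1::int) \<in> {1..int N}" using assms(2) by simp
  have "lap h \<psi> 1 1 - b 1 1 = grid_sum N (\<lambda>i j. (lap h \<psi> i j - b i j) * delta_at N 1 1 i j)"
    using grid_sum_mult_delta_at[OF one one] by simp
  also have "\<dots> = grid_sum N (\<lambda>i j. lap h \<psi> i j - b i j)"
    using el by (intro grid_sum_cong) (auto simp: delta_at_def period_rep_id)
  also have "\<dots> = 0" using grid_sum_lap[OF per] assms(4) by (simp add: grid_sum_diff)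
  finally have "lap h \<psi> 1 1 = b 1 1" by simp
  then have "lap h \<psi> = b"
    using el by (intro periodic_eqI[OF assms(2) periodic_lap[OF per] assms(3)]) fastforce
  with per show ?thesis by blast
qed

text \<open>The discrete Green's function is determined only up to an additive constant, which \<open>SOME\<close> fixes
  arbitrarily; \<open>inv_lap\<close> below is therefore an inverse of \<open>lap h\<close> on mean-zero grid functions only.\<close>

definition green :: "nat \<Rightarrow> real \<Rightarrow> int \<Rightarrow> int \<Rightarrow> gridfun" where
  "green N h a b = (SOME \<psi>. periodic N \<psi> \<and> lap h \<psi> = (\<lambda>x y. delta_at N a b x y - 1 / (real N)\<^sup>2))"

lemma green_solves:
  assumes "0 < h" "0 < N" "a \<in> {1..int N}" "b \<in> {1..int N}"
  shows "periodic N (green N h a b) \<and> lap h (green N h a b) = (\<lambda>x y. delta_at N a b x y - 1 / (real N)\<^sup>2)"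
proof -
  have "grid_sum N (\<lambda>x y. delta_at N a b x y - 1 / (real N)\<^sup>2) = 0"
    using assms(2) by (simp add: grid_sum_diff grid_sum_const grid_sum_delta_at[OF assms(3,4)])
  then have "\<exists>\<psi>. periodic N \<psi> \<and> lap h \<psi> = (\<lambda>x y. delta_at N a b x y - 1 / (real N)\<^sup>2)"
    by (intro discrete_poisson_solvable[OF assms(1,2)] periodic_compose[OF periodic_delta_at])
  then show ?thesis unfolding green_def by (rule someI_ex)
qed

definition inv_lap :: "nat \<Rightarrow> real \<Rightarrow> gridfun \<Rightarrow> gridfun" where
  "inv_lap N h v x y = grid_sum N (\<lambda>a b. v a b * green N h a b x y)"

lemma periodic_inv_lap:
  assumes "0 < h" "0 < N"
  shows "periodic N (inv_lap N h v)"
  unfolding periodic_def inv_lap_def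
  using green_solves[OF assms] by (auto intro!: grid_sum_cong simp: periodic_def)

lemma lap_inv_lap:
  assumes "0 < h" "0 < N" "periodic N v"
  shows "lap h (inv_lap N h v) x y = v x y - grid_sum N v / (real N)\<^sup>2"
proof -
  have "lap h (inv_lap N h v) x y = grid_sum N (\<lambda>a b. v a b * lap h (green N h a b) x y)"
    unfolding inv_lap_def[abs_def] lap_expand
    by (simp add: grid_sum_add grid_sum_diff grid_sum_cmult[symmetric] grid_sum_divide[symmetric] algebra_simps
        diff_divide_distrib add_divide_distrib)
  also have "\<dots> = grid_sum N (\<lambda>a b. v a b * delta_at N (period_rep N x) (period_rep N y) a b - v a b / (real N)\<^sup>2)"
    using green_solves[OF assms(1,2)] by (intro grid_sum_cong) (auto simp: delta_at_def period_rep_id algebra_simps)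
  also have "\<dots> = v x y - grid_sum N v / (real N)\<^sup>2"
    using periodic_at_period_rep[OF assms(3)]
      grid_sum_mult_delta_at[OF period_rep_mem period_rep_mem, OF assms(2) assms(2)]
    by (simp add: grid_sum_diff grid_sum_divide)
  finally show ?thesis .
qed

lemma inv_lap_symmetric:
  assumes "0 < h" "0 < N" "periodic N u" "periodic N v" "grid_sum N u = 0" "grid_sum N v = 0"
  shows "grid_sum N (\<lambda>i j. u i j * inv_lap N h v i j) = grid_sum N (\<lambda>i j. v i j * inv_lap N h u i j)"
proof -
  have "lap h (inv_lap N h u) = u" "lap h (inv_lap N h v) = v"
    using lap_inv_lap[OF assms(1,2)] assms(3-6) by (auto simp: fun_eq_iff)
  then show ?thesis
    using grid_sum_mult_lap_sym[OF periodic_inv_lap periodic_inv_lap, OF assms(1,2) assms(1,2), of v h u]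
    by (simp add: mult.commute)
qed

lemma abs_inv_lap_le:
  assumes "\<And>a b. \<bar>v a b\<bar> \<le> c"
  shows "\<bar>inv_lap N h v x y\<bar> \<le> c * grid_sum N (\<lambda>a b. \<bar>green N h a b x y\<bar>)"
  unfolding inv_lap_def grid_sum_cmult[symmetric]
  by (rule order_trans[OF grid_sum_abs grid_sum_mono]) (simp add: abs_mult assms mult_right_mono)

lemma green_abs_sum_bounded:
  assumes "0 < h" "0 < N"
  obtains G where "\<And>x y. grid_sum N (\<lambda>a b. \<bar>green N h a b x y\<bar>) \<le> G"
proof -
  have "green N h a b (x + int N) y = green N h a b x y" "green N h a b x (y + int N) = green N h a b x y"
    if "a \<in> {1..int N}" "b \<in> {1..int N}" for a b x y
    using green_solves[OF assms that] unfolding periodic_def by blast+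
  then have "periodic N (\<lambda>x y. grid_sum N (\<lambda>a b. \<bar>green N h a b x y\<bar>))"
    unfolding periodic_def by (intro allI conjI grid_sum_cong) simp_all
  then obtain G where "\<And>x y. \<bar>grid_sum N (\<lambda>a b. \<bar>green N h a b x y\<bar>)\<bar> \<le> G"
    using periodic_bounded[OF assms(2)] by blast
  then show ?thesis using that abs_le_D1 by blast
qed

lemma inv_lap_lin: "inv_lap N h (\<lambda>i j. f i j + s * g i j) x y = inv_lap N h f x y + s * inv_lap N h g x y"
  unfolding inv_lap_def by (simp add: distrib_right grid_sum_add grid_sum_cmult[symmetric] mult.assoc)

section \<open>Bounds at extremal points\<close>

lemma lap_at_min_nonneg: "0 < h \<Longrightarrow> (\<And>x y. \<phi> a b \<le> \<phi> x y) \<Longrightarrow> 0 \<le> lap h \<phi> a b"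
  unfolding lap_expand
  by (intro divide_nonneg_pos) (smt (verit) zero_less_power, simp)

lemma lap_at_max_nonpos: "0 < h \<Longrightarrow> (\<And>x y. \<phi> x y \<le> \<phi> a b) \<Longrightarrow> lap h \<phi> a b \<le> 0"
  unfolding lap_expand
  by (intro divide_nonpos_pos) (smt (verit) zero_less_power, simp)

lemma kappa_pos: "0 < x \<Longrightarrow> x < 1 \<Longrightarrow> 0 < kappa x"
  unfolding kappa_def by simp

lemma kappap_le:
  assumes "0 < x" "x < c" "c < 1"
  shows "kappap x \<le> 1 / (9 * (1 - c)\<^sup>2)"
proof (cases "x \<le> 1 / 2")
  case True
  then have "kappap x \<le> 0" using assms unfolding kappap_def by (intro divide_nonpos_pos) auto
  moreover have "0 \<le> 1 / (9 * (1 - c)\<^sup>2)" by simp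
  ultimately show ?thesis by linarith
next
  case False
  have "9 * (1 - c)\<^sup>2 = 36 * (1 / 2)\<^sup>2 * (1 - c)\<^sup>2" by (simp add: power2_eq_square)
  also have "\<dots> \<le> 36 * x\<^sup>2 * (1 - x)\<^sup>2"
    using False assms by (intro mult_mono power_mono) auto
  finally show ?thesis
    unfolding kappap_def using False assms by (intro frac_le) auto
qed

lemma kappap_ge:
  assumes "0 < m" "m \<le> x" "x < c" "c < 1"
  shows "- (1 / (36 * m\<^sup>2 * (1 - c)\<^sup>2)) \<le> kappap x"
proof -
  have "36 * m\<^sup>2 * (1 - c)\<^sup>2 \<le> 36 * x\<^sup>2 * (1 - x)\<^sup>2"
    using assms by (intro mult_mono power_mono) auto
  then have "1 / (36 * x\<^sup>2 * (1 - x)\<^sup>2) \<le> 1 / (36 * m\<^sup>2 * (1 - c)\<^sup>2)"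
    using assms by (intro divide_left_mono) auto
  moreover have "- 1 / (36 * x\<^sup>2 * (1 - x)\<^sup>2) \<le> (2 * x - 1) / (36 * x\<^sup>2 * (1 - x)\<^sup>2)"
    using assms by (intro divide_right_mono) auto
  ultimately show ?thesis unfolding kappap_def by simp
qed

lemma ax_sq_Dx_le:
  assumes "0 < h" "\<And>i j. 0 < \<phi> i j \<and> \<phi> i j < c"
  shows "ax (\<lambda>a b. (Dx h \<phi> a b)\<^sup>2) x y \<le> (c / h)\<^sup>2"
proof -
  have sq: "((\<phi> x2 y2 - \<phi> x1 y1) / h)\<^sup>2 \<le> (c / h)\<^sup>2" for x1 y1 x2 y2
  proof -
    have "\<bar>\<phi> x2 y2 - \<phi> x1 y1\<bar> / h \<le> c / h"
      using assms(1) assms(2)[of x1 y1] assms(2)[of x2 y2] by (intro divide_right_mono) auto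
    then have "(\<bar>\<phi> x2 y2 - \<phi> x1 y1\<bar> / h)\<^sup>2 \<le> (c / h)\<^sup>2" by (intro power_mono) (use assms(1) in auto)
    then show ?thesis by (simp add: power_divide)
  qed
  show ?thesis using sq[of "x + 1" y x y] sq[of x y "x - 1" y] unfolding ax_def Dx_def by simp
qed

lemma kappa_pot_at_min_le:
  assumes "0 < h" "c < 1" "\<And>i j. 0 < \<phi> i j \<and> \<phi> i j < c" "\<And>x y. \<phi> a b \<le> \<phi> x y"
  shows "kappa_pot h \<phi> a b \<le> (c / h)\<^sup>2 / (9 * (1 - c)\<^sup>2)"
proof -
  have "0 \<le> dx h (\<lambda>a b. Ax (\<lambda>c d. kappa (\<phi> c d)) a b * Dx h \<phi> a b) a b"
    unfolding dx_def Ax_def Dx_def using assms kappa_pos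
    by (intro divide_nonneg_pos)
      (smt (verit) divide_nonneg_pos divide_nonpos_pos mult_nonneg_nonneg mult_nonneg_nonpos, simp)
  moreover have "kappap (\<phi> a b) * ax (\<lambda>a b. (Dx h \<phi> a b)\<^sup>2) a b \<le> 1 / (9 * (1 - c)\<^sup>2) * (c / h)\<^sup>2"
    using kappap_le[of "\<phi> a b" c] assms(2,3) ax_sq_Dx_le[where \<phi> = \<phi>, OF assms(1,3), of a b]
    by (intro mult_mono) (auto simp: ax_def)
  ultimately show ?thesis unfolding kappa_pot_def by simp
qed

lemma kappa_pot_at_max_ge:
  assumes "0 < h" "c < 1" "\<And>i j. 0 < \<phi> i j \<and> \<phi> i j < c" "\<And>x y. \<phi> x y \<le> \<phi> a b"
    and "0 < m" "m \<le> \<phi> a b"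
  shows "- ((c / h)\<^sup>2 / (36 * m\<^sup>2 * (1 - c)\<^sup>2)) \<le> kappa_pot h \<phi> a b"
proof -
  have "dx h (\<lambda>a b. Ax (\<lambda>c d. kappa (\<phi> c d)) a b * Dx h \<phi> a b) a b \<le> 0"
    unfolding dx_def Ax_def Dx_def using assms kappa_pos
    by (intro divide_nonpos_pos)
      (smt (verit) divide_nonneg_pos divide_nonpos_pos mult_nonneg_nonneg mult_nonneg_nonpos, simp)
  moreover have "- (1 / (36 * m\<^sup>2 * (1 - c)\<^sup>2)) * (c / h)\<^sup>2 \<le> kappap (\<phi> a b) * ax (\<lambda>a b. (Dx h \<phi> a b)\<^sup>2) a b"
  proof -
    define K X where "K = 1 / (36 * m\<^sup>2 * (1 - c)\<^sup>2)" and "X = ax (\<lambda>a b. (Dx h \<phi> a b)\<^sup>2) a b"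
    have X: "0 \<le> X" "X \<le> (c / h)\<^sup>2"
      using ax_sq_Dx_le[where \<phi> = \<phi>, OF assms(1,3), of a b] by (auto simp: X_def ax_def)
    have "- K * (c / h)\<^sup>2 \<le> - K * X" using X by (simp add: K_def divide_right_mono)
    also have "\<dots> \<le> kappap (\<phi> a b) * X"
      using kappap_ge[of m "\<phi> a b" c] assms X(1) by (intro mult_right_mono) (auto simp: K_def)
    finally show ?thesis unfolding K_def X_def by simp
  qed
  ultimately show ?thesis unfolding kappa_pot_def by simp
qed

section \<open>Existence by energy minimisation\<close>

definition S_prim :: "real \<Rightarrow> real \<Rightarrow> real \<Rightarrow> real" where
  "S_prim N1 N2 x = (1 / tau N1 N2 + 1 / N1) * (x * ln x - x)
     + (1 - rho N1 N2 * x) * ln (1 - rho N1 N2 * x) + rho N1 N2 * x"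

lemma DERIV_entropy:
  fixes a r x :: real
  assumes "0 < x" "r * x < 1"
  shows "DERIV (\<lambda>x. a * (x * ln x - x) + (1 - r * x) * ln (1 - r * x) + r * x) x
    :> a * ln x - r * ln (1 - r * x)"
proof -
  have d1: "DERIV (\<lambda>x. x * ln x - x) x :> ln x"
    using assms by (auto intro!: derivative_eq_intros)
  have d2: "DERIV (\<lambda>x. (1 - r * x) * ln (1 - r * x)) x :> - r * ln (1 - r * x) - r"
  proof -
    have pos: "0 < 1 - r * x" using assms by simp
    have lin: "DERIV (\<lambda>x. 1 - r * x) x :> - r" by (auto intro!: derivative_eq_intros)
    have "DERIV (\<lambda>x. ln (1 - r * x)) x :> 1 / (1 - r * x) * - r"
      by (rule DERIV_chain2[OF DERIV_ln_divide[OF pos] lin])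
    from DERIV_mult[OF lin this] show ?thesis using pos by simp
  qed
  have "DERIV (\<lambda>x. a * (x * ln x - x) + (1 - r * x) * ln (1 - r * x) + r * x) x
    :> a * ln x + (- r * ln (1 - r * x) - r) + r * 1"
    by (intro DERIV_add DERIV_cmult d1 d2 DERIV_ident)
  then show ?thesis by simp
qed

lemma DERIV_S_prim:
  "0 < x \<Longrightarrow> rho N1 N2 * x < 1 \<Longrightarrow> DERIV (S_prim N1 N2) x :> Sp N1 N2 x"
  unfolding S_prim_def[abs_def] Sp_def using DERIV_entropy by simp

definition dipole :: "nat \<Rightarrow> int \<Rightarrow> int \<Rightarrow> int \<Rightarrow> int \<Rightarrow> gridfun" where
  "dipole N a b c d x y = delta_at N a b x y - delta_at N c d x y"

lemma periodic_dipole: "periodic N (dipole N a b c d)"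
  unfolding dipole_def[abs_def] by (rule periodic_compose2[OF periodic_delta_at periodic_delta_at])

lemma grid_sum_mult_dipole:
  assumes "a \<in> {1..int N}" "b \<in> {1..int N}" "c \<in> {1..int N}" "d \<in> {1..int N}"
  shows "grid_sum N (\<lambda>i j. f i j * dipole N a b c d i j) = f a b - f c d"
  using grid_sum_mult_delta_at[OF assms(1,2), of f] grid_sum_mult_delta_at[OF assms(3,4), of f]
  unfolding dipole_def by (simp add: right_diff_distrib grid_sum_diff)

lemma abs_dipole_le_1: "\<bar>dipole N a b c d x y\<bar> \<le> 1"
  unfolding dipole_def delta_at_def by auto

locale bdf2_step =
  fixes N1 N2 \<chi> h dt A :: real and N :: nat and p q :: gridfun
  assumes N1: "0 < N1" and N2: "0 < N2" and dt: "0 < dt" and A: "0 < A" and h: "0 < h" and N: "0 < N"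
    and periodic_p: "periodic N p" and periodic_q: "periodic N q"
    and p_range: "\<And>i j. 0 < p i j \<and> p i j < 1 / rho N1 N2"
    and q_range: "\<And>i j. 0 < q i j \<and> q i j < 1 / rho N1 N2"
    and sum_p_q: "grid_sum N p = grid_sum N q"
begin

abbreviation mu :: "gridfun \<Rightarrow> gridfun" where
  "mu \<equiv> chem_pot N1 N2 \<chi> h dt A p q"

definition time_diff :: "gridfun \<Rightarrow> gridfun" where
  "time_diff \<phi> i j = (3 * \<phi> i j - 4 * p i j + q i j) / (2 * dt)"

text \<open>The nonlocal part is a multiple of the squared \<open>H\<^sup>-\<^sup>1\<close> norm of the time difference. On the
  mass-constrained set the Euler-Lagrange equation makes \<open>energy_grad = \<mu> - inv_lap (time_diff \<phi>)\<close>
  constant, and applying \<open>lap h\<close> to it gives the first equation of the scheme.\<close>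

definition local_energy :: "gridfun \<Rightarrow> real" where
  "local_energy \<phi> = grid_sum N (\<lambda>i j. S_prim N1 N2 (\<phi> i j) + Hp N1 N2 \<chi> (2 * p i j - q i j) * \<phi> i j
     + edge_energy h (\<phi> i j) (\<phi> (i + 1) j) + edge_energy h (\<phi> i j) (\<phi> i (j + 1))
     + A * dt / 2 * ((Dx h (\<lambda>a b. \<phi> a b - p a b) i j)\<^sup>2 + (Dy h (\<lambda>a b. \<phi> a b - p a b) i j)\<^sup>2))"

definition nonlocal_energy :: "gridfun \<Rightarrow> real" where
  "nonlocal_energy \<phi> = - (dt / 3) * grid_sum N (\<lambda>i j. time_diff \<phi> i j * inv_lap N h (time_diff \<phi>) i j)"

definition energy :: "gridfun \<Rightarrow> real" where
  "energy \<phi> = local_energy \<phi> + nonlocal_energy \<phi>"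

definition energy_grad :: "gridfun \<Rightarrow> gridfun" where
  "energy_grad \<phi> i j = mu \<phi> i j - inv_lap N h (time_diff \<phi>) i j"

definition local_energy_deriv :: "gridfun \<Rightarrow> gridfun \<Rightarrow> gridfun" where
  "local_energy_deriv \<phi> \<eta> i j = Sp N1 N2 (\<phi> i j) * \<eta> i j + Hp N1 N2 \<chi> (2 * p i j - q i j) * \<eta> i j
     + edge_energy_deriv h (\<phi> i j) (\<phi> (i + 1) j) (\<eta> i j) (\<eta> (i + 1) j)
     + edge_energy_deriv h (\<phi> i j) (\<phi> i (j + 1)) (\<eta> i j) (\<eta> i (j + 1))
     + A * dt * (Dx h (\<lambda>a b. \<phi> a b - p a b) i j * Dx h \<eta> i j
       + Dy h (\<lambda>a b. \<phi> a b - p a b) i j * Dy h \<eta> i j)"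

lemma rho_inv_lt_1: "1 / rho N1 N2 < 1"
  using rho_gt_1[OF N1 N2] by simp

lemma periodic_time_diff: "periodic N \<phi> \<Longrightarrow> periodic N (time_diff \<phi>)"
  unfolding time_diff_def[abs_def] using periodic_p periodic_q by (simp add: periodic_def)

lemma grid_sum_time_diff: "grid_sum N \<phi> = grid_sum N p \<Longrightarrow> grid_sum N (time_diff \<phi>) = 0"
  unfolding time_diff_def using sum_p_q by (simp add: grid_sum_divide grid_sum_add grid_sum_diff grid_sum_cmult)

lemma grid_sum_mu_mult:
  assumes "periodic N \<phi>" "periodic N \<eta>"
  shows "grid_sum N (\<lambda>i j. mu \<phi> i j * \<eta> i j) = grid_sum N (local_energy_deriv \<phi> \<eta>)"
proof -
  have lap: "grid_sum N (\<lambda>i j. lap h (\<lambda>a b. \<phi> a b - p a b) i j * \<eta> i j)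
      = - grid_sum N (\<lambda>i j. Dx h (\<lambda>a b. \<phi> a b - p a b) i j * Dx h \<eta> i j
          + Dy h (\<lambda>a b. \<phi> a b - p a b) i j * Dy h \<eta> i j)"
    using grid_sum_mult_lap[OF assms(2) periodic_compose2[OF assms(1) periodic_p]] by (simp add: mult.commute)
  have "grid_sum N (\<lambda>i j. mu \<phi> i j * \<eta> i j)
    = grid_sum N (\<lambda>i j. Sp N1 N2 (\<phi> i j) * \<eta> i j) + grid_sum N (\<lambda>i j. Hp N1 N2 \<chi> (2 * p i j - q i j) * \<eta> i j)
      + grid_sum N (\<lambda>i j. kappa_pot h \<phi> i j * \<eta> i j)
      + grid_sum N (\<lambda>i j. kappa_pot h (\<lambda>a b. \<phi> b a) j i * \<eta> i j)
      - A * dt * grid_sum N (\<lambda>i j. lap h (\<lambda>a b. \<phi> a b - p a b) i j * \<eta> i j)"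
    unfolding grid_sum_cmult[symmetric] grid_sum_add[symmetric] grid_sum_diff[symmetric]
    by (rule grid_sum_cong) (simp add: chem_pot_def algebra_simps)
  also have "\<dots> = grid_sum N (local_energy_deriv \<phi> \<eta>)"
    unfolding lap grid_sum_kappa_pot[OF assms] grid_sum_kappa_pot_transpose[OF assms] local_energy_deriv_def
    by (simp add: grid_sum_add grid_sum_cmult algebra_simps)
  finally show ?thesis .
qed

lemma DERIV_local_energy:
  assumes "periodic N \<phi>" "\<And>i j. 0 < \<phi> i j \<and> \<phi> i j < 1 / rho N1 N2" "periodic N \<eta>"
  shows "DERIV (\<lambda>s. local_energy (perturb \<phi> s \<eta>)) 0 :> grid_sum N (\<lambda>i j. mu \<phi> i j * \<eta> i j)"
proof -
  have range: "0 < \<phi> i j" "\<phi> i j < 1" "rho N1 N2 * \<phi> i j < 1" for i j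
  proof -
    show "0 < \<phi> i j" "\<phi> i j < 1" using assms(2)[of i j] rho_inv_lt_1 by auto
    show "rho N1 N2 * \<phi> i j < 1"
      using assms(2)[of i j] rho_gt_1[OF N1 N2] by (simp add: less_divide_eq mult.commute)
  qed
  have grad: "Dx h (\<lambda>a b. perturb \<phi> s \<eta> a b - p a b) i j = Dx h (\<lambda>a b. \<phi> a b - p a b) i j + s * Dx h \<eta> i j"
    "Dy h (\<lambda>a b. perturb \<phi> s \<eta> a b - p a b) i j = Dy h (\<lambda>a b. \<phi> a b - p a b) i j + s * Dy h \<eta> i j"
    for s i j unfolding Dx_def Dy_def perturb_def by (simp_all add: divide_inverse algebra_simps)
  have quad: "DERIV (\<lambda>s. c / 2 * ((x + s * y)\<^sup>2 + (z + s * w)\<^sup>2)) 0 :> c * (x * y + z * w)"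
    for c x y z w :: real
    by (auto intro!: derivative_eq_intros simp: algebra_simps)
  have "DERIV (\<lambda>s. local_energy (perturb \<phi> s \<eta>)) 0 :> grid_sum N (local_energy_deriv \<phi> \<eta>)"
    unfolding local_energy_def local_energy_deriv_def[abs_def] grad
  proof (intro grid_sum_DERIV DERIV_add)
    fix i j
    show "DERIV (\<lambda>s. S_prim N1 N2 (perturb \<phi> s \<eta> i j)) 0 :> Sp N1 N2 (\<phi> i j) * \<eta> i j"
      unfolding perturb_def
      by (rule DERIV_chain2[of "S_prim N1 N2" _ "\<lambda>s. \<phi> i j + s * \<eta> i j" 0 "\<eta> i j"])
        (use DERIV_S_prim[OF range(1,3)] in \<open>auto intro!: derivative_eq_intros\<close>)
    show "DERIV (\<lambda>s. Hp N1 N2 \<chi> (2 * p i j - q i j) * perturb \<phi> s \<eta> i j) 0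
        :> Hp N1 N2 \<chi> (2 * p i j - q i j) * \<eta> i j"
      unfolding perturb_def by (auto intro!: derivative_eq_intros)
    show "DERIV (\<lambda>s. edge_energy h (perturb \<phi> s \<eta> i j) (perturb \<phi> s \<eta> (i + 1) j)) 0
        :> edge_energy_deriv h (\<phi> i j) (\<phi> (i + 1) j) (\<eta> i j) (\<eta> (i + 1) j)"
      unfolding perturb_def using range by (intro DERIV_edge_energy)
    show "DERIV (\<lambda>s. edge_energy h (perturb \<phi> s \<eta> i j) (perturb \<phi> s \<eta> i (j + 1))) 0
        :> edge_energy_deriv h (\<phi> i j) (\<phi> i (j + 1)) (\<eta> i j) (\<eta> i (j + 1))"
      unfolding perturb_def using range by (intro DERIV_edge_energy)
  qed (rule quad)
  then show ?thesis unfolding grid_sum_mu_mult[OF assms(1,3)] .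
qed

lemma DERIV_nonlocal_energy:
  assumes "periodic N \<phi>" "grid_sum N \<phi> = grid_sum N p" "periodic N \<eta>" "grid_sum N \<eta> = 0"
  shows "DERIV (\<lambda>s. nonlocal_energy (perturb \<phi> s \<eta>)) 0
    :> - grid_sum N (\<lambda>i j. \<eta> i j * inv_lap N h (time_diff \<phi>) i j)"
proof -
  define f \<beta> where "f = time_diff \<phi>" and "\<beta> = 3 / (2 * dt)"
  have td: "time_diff (perturb \<phi> s \<eta>) = (\<lambda>i j. f i j + s * (\<beta> * \<eta> i j))" for s
    unfolding f_def \<beta>_def time_diff_def[abs_def] perturb_def using dt by (auto simp: field_simps)
  have G: "inv_lap N h (\<lambda>i j. f i j + s * (\<beta> * \<eta> i j)) i j = inv_lap N h f i j + s * (\<beta> * inv_lap N h \<eta> i j)"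
    for s i j
    using inv_lap_lin[of N h f s "\<lambda>i j. \<beta> * \<eta> i j"] by (simp add: inv_lap_def grid_sum_cmult[symmetric] mult_ac)
  have deriv: "DERIV (\<lambda>s. nonlocal_energy (perturb \<phi> s \<eta>)) 0
    :> - (dt / 3) * grid_sum N (\<lambda>i j. \<beta> * \<eta> i j * inv_lap N h f i j + f i j * (\<beta> * inv_lap N h \<eta> i j))"
    unfolding nonlocal_energy_def td G
    by (intro DERIV_cmult grid_sum_DERIV) (auto intro!: derivative_eq_intros)
  have sym: "grid_sum N (\<lambda>i j. f i j * inv_lap N h \<eta> i j) = grid_sum N (\<lambda>i j. \<eta> i j * inv_lap N h f i j)"
    unfolding f_def
    by (rule inv_lap_symmetric[OF h N periodic_time_diff[OF assms(1)] assms(3) grid_sum_time_diff[OF assms(2)] assms(4)])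
  have "grid_sum N (\<lambda>i j. \<beta> * \<eta> i j * inv_lap N h f i j + f i j * (\<beta> * inv_lap N h \<eta> i j))
      = \<beta> * grid_sum N (\<lambda>i j. \<eta> i j * inv_lap N h f i j) + \<beta> * grid_sum N (\<lambda>i j. f i j * inv_lap N h \<eta> i j)"
    unfolding grid_sum_cmult[symmetric] grid_sum_add[symmetric] by (simp add: mult_ac)
  also have "\<dots> = 2 * \<beta> * grid_sum N (\<lambda>i j. \<eta> i j * inv_lap N h f i j)"
    unfolding sym by simp
  finally show ?thesis
    using deriv dt unfolding f_def \<beta>_def by simp
qed

definition mean_p :: real where
  "mean_p = grid_sum N p / (real N)\<^sup>2"

lemma mean_le_max:
  assumes "grid_sum N \<phi> = grid_sum N p" "\<And>x y. \<phi> x y \<le> \<phi> c d"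
  shows "mean_p \<le> \<phi> c d"
  using grid_sum_mono[of N \<phi> "\<lambda>_ _. \<phi> c d"] assms N
  unfolding mean_p_def by (simp add: grid_sum_const divide_le_eq mult.commute)

lemma min_le_mean:
  assumes "grid_sum N \<phi> = grid_sum N p" "\<And>x y. \<phi> a b \<le> \<phi> x y"
  shows "\<phi> a b \<le> mean_p"
  using grid_sum_mono[of N "\<lambda>_ _. \<phi> a b" \<phi>] assms N
  unfolding mean_p_def by (simp add: grid_sum_const le_divide_eq mult.commute)

lemma mean_p_range: "0 < mean_p" "mean_p < 1 / rho N1 N2"
proof -
  obtain a b where min: "\<And>x y. p a b \<le> p x y" using periodic_attains_min[OF N periodic_p] by metis
  have "p a b \<le> mean_p" by (rule min_le_mean[OF refl min])
  then show "0 < mean_p" using p_range[of a b] by linarith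
  obtain c d where max: "\<And>x y. p x y \<le> p c d" using periodic_attains_max[OF N periodic_p] by metis
  have "mean_p \<le> p c d" by (rule mean_le_max[OF refl max])
  then show "mean_p < 1 / rho N1 N2" using p_range[of c d] by linarith
qed

lemma periodic_energy_grad: "periodic N \<phi> \<Longrightarrow> periodic N (energy_grad \<phi>)"
  unfolding energy_grad_def[abs_def]
  by (rule periodic_compose2[OF periodic_chem_pot[OF _ periodic_p periodic_q] periodic_inv_lap[OF h N]])

lemma abs_time_diff_le:
  assumes "0 < \<phi> i j" "\<phi> i j < 1 / rho N1 N2"
  shows "\<bar>time_diff \<phi> i j\<bar> \<le> 2 / (rho N1 N2 * dt)"
proof -
  have "\<bar>3 * \<phi> i j - 4 * p i j + q i j\<bar> \<le> 4 / rho N1 N2"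
    using assms p_range[of i j] q_range[of i j] by (simp add: abs_le_iff)
  then have "\<bar>3 * \<phi> i j - 4 * p i j + q i j\<bar> / (2 * dt) \<le> 4 / rho N1 N2 / (2 * dt)"
    using dt by (intro divide_right_mono) auto
  then show ?thesis unfolding time_diff_def using dt by (simp add: mult.commute)
qed

lemma inv_lap_time_diff_bounded:
  obtains M where "\<And>\<phi> x y. (\<And>i j. 0 < \<phi> i j \<and> \<phi> i j < 1 / rho N1 N2) \<Longrightarrow> \<bar>inv_lap N h (time_diff \<phi>) x y\<bar> \<le> M"
proof -
  obtain G where G: "\<And>x y. grid_sum N (\<lambda>a b. \<bar>green N h a b x y\<bar>) \<le> G"
    using green_abs_sum_bounded[OF h N] by blast
  have "\<bar>inv_lap N h (time_diff \<phi>) x y\<bar> \<le> 2 / (rho N1 N2 * dt) * G"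
    if range: "\<And>i j. 0 < \<phi> i j \<and> \<phi> i j < 1 / rho N1 N2" for \<phi> x y
  proof -
    have "\<bar>inv_lap N h (time_diff \<phi>) x y\<bar> \<le> 2 / (rho N1 N2 * dt) * grid_sum N (\<lambda>a b. \<bar>green N h a b x y\<bar>)"
      using abs_time_diff_le range by (intro abs_inv_lap_le) blast
    also have "\<dots> \<le> 2 / (rho N1 N2 * dt) * G"
      using G[of x y] rho_gt_1[OF N1 N2] dt by (intro mult_left_mono) auto
    finally show ?thesis .
  qed
  then show ?thesis by (rule that)
qed

lemma energy_grad_expand:
  "energy_grad \<phi> i j = Sp N1 N2 (\<phi> i j) + kappa_pot h \<phi> i j + kappa_pot h (\<lambda>a b. \<phi> b a) j i
     + Hp N1 N2 \<chi> (2 * p i j - q i j) - A * dt * lap h \<phi> i j + A * dt * lap h p i j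
     - inv_lap N h (time_diff \<phi>) i j"
  unfolding energy_grad_def chem_pot_def lap_diff by (simp add: algebra_simps)

definition grad_gap_bound :: "real \<Rightarrow> bool" where
  "grad_gap_bound C \<longleftrightarrow> (\<forall>\<phi> a b c d. periodic N \<phi> \<longrightarrow> (\<forall>i j. 0 < \<phi> i j \<and> \<phi> i j < 1 / rho N1 N2)
     \<longrightarrow> grid_sum N \<phi> = grid_sum N p \<longrightarrow> (\<forall>x y. \<phi> a b \<le> \<phi> x y) \<longrightarrow> (\<forall>x y. \<phi> x y \<le> \<phi> c d)
     \<longrightarrow> energy_grad \<phi> a b - energy_grad \<phi> c d \<le> Sp N1 N2 (\<phi> a b) - Sp N1 N2 (\<phi> c d) + C)"

lemma grad_gap_bound_exists: "\<exists>C. grad_gap_bound C"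
proof -
  let ?r = "1 / rho N1 N2"
  have "periodic N (\<lambda>x y. Hp N1 N2 \<chi> (2 * p x y - q x y))"
    using periodic_p periodic_q by (simp add: periodic_def)
  then obtain Hb where Hb: "\<And>x y. \<bar>Hp N1 N2 \<chi> (2 * p x y - q x y)\<bar> \<le> Hb"
    using periodic_bounded[OF N] by blast
  have "periodic N (\<lambda>x y. A * dt * lap h p x y)"
    using periodic_lap[OF periodic_p] by (simp add: periodic_def)
  then obtain Lb where Lb: "\<And>x y. \<bar>A * dt * lap h p x y\<bar> \<le> Lb"
    using periodic_bounded[OF N] by blast
  obtain Gb where Gb: "\<And>\<phi> x y. (\<And>i j. 0 < \<phi> i j \<and> \<phi> i j < ?r) \<Longrightarrow> \<bar>inv_lap N h (time_diff \<phi>) x y\<bar> \<le> Gb"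
    by (rule inv_lap_time_diff_bounded) blast
  define KU KL where "KU = (?r / h)\<^sup>2 / (9 * (1 - ?r)\<^sup>2)" and "KL = (?r / h)\<^sup>2 / (36 * mean_p\<^sup>2 * (1 - ?r)\<^sup>2)"
  have "energy_grad \<phi> a b - energy_grad \<phi> c d \<le> Sp N1 N2 (\<phi> a b) - Sp N1 N2 (\<phi> c d)
      + (2 * KU + 2 * KL + 2 * Hb + 2 * Lb + 2 * Gb)"
    if per: "periodic N \<phi>" and range: "\<And>i j. 0 < \<phi> i j \<and> \<phi> i j < ?r"
      and mass: "grid_sum N \<phi> = grid_sum N p"
      and min: "\<And>x y. \<phi> a b \<le> \<phi> x y" and max: "\<And>x y. \<phi> x y \<le> \<phi> c d" for \<phi> a b c d
  proof -
    have "kappa_pot h \<phi> a b \<le> KU" "kappa_pot h (\<lambda>a b. \<phi> b a) b a \<le> KU"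
      unfolding KU_def by (rule kappa_pot_at_min_le[OF h rho_inv_lt_1]; use range min in simp)+
    moreover have "- KL \<le> kappa_pot h \<phi> c d" "- KL \<le> kappa_pot h (\<lambda>a b. \<phi> b a) d c"
      unfolding KL_def
      by (rule kappa_pot_at_max_ge[OF h rho_inv_lt_1];
          use range max mean_p_range(1) mean_le_max[OF mass max] in simp)+
    moreover have "0 \<le> A * dt * lap h \<phi> a b" "A * dt * lap h \<phi> c d \<le> 0"
      using A dt lap_at_min_nonneg[where \<phi> = \<phi>, OF h min] lap_at_max_nonpos[where \<phi> = \<phi>, OF h max]
      by (simp_all add: mult_nonneg_nonpos)
    moreover have "\<bar>inv_lap N h (time_diff \<phi>) a b\<bar> \<le> Gb" "\<bar>inv_lap N h (time_diff \<phi>) c d\<bar> \<le> Gb"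
      using Gb[where \<phi> = \<phi>, OF range] by blast+
    ultimately show ?thesis
      unfolding energy_grad_expand using Hb[of a b] Hb[of c d] Lb[of a b] Lb[of c d] by (simp add: abs_le_iff)
  qed
  then have "grad_gap_bound (2 * KU + 2 * KL + 2 * Hb + 2 * Lb + 2 * Gb)"
    unfolding grad_gap_bound_def by blast
  then show ?thesis ..
qed

lemma DERIV_energy_dipole:
  assumes "periodic N \<phi>" "\<And>i j. 0 < \<phi> i j \<and> \<phi> i j < 1 / rho N1 N2" "grid_sum N \<phi> = grid_sum N p"
    and ab: "a \<in> {1..int N}" "b \<in> {1..int N}" "c \<in> {1..int N}" "d \<in> {1..int N}"
  shows "DERIV (\<lambda>s. energy (perturb \<phi> s (dipole N a b c d))) 0 :> energy_grad \<phi> a b - energy_grad \<phi> c d"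
proof -
  have "grid_sum N (dipole N a b c d) = 0"
    using grid_sum_mult_dipole[OF ab, of "\<lambda>_ _. 1"] by simp
  then have "DERIV (\<lambda>s. energy (perturb \<phi> s (dipole N a b c d))) 0
      :> grid_sum N (\<lambda>i j. mu \<phi> i j * dipole N a b c d i j)
         + - grid_sum N (\<lambda>i j. dipole N a b c d i j * inv_lap N h (time_diff \<phi>) i j)"
    unfolding energy_def[abs_def]
    by (intro DERIV_add DERIV_local_energy DERIV_nonlocal_energy assms periodic_dipole)
  moreover have "grid_sum N (\<lambda>i j. mu \<phi> i j * dipole N a b c d i j)
      + - grid_sum N (\<lambda>i j. dipole N a b c d i j * inv_lap N h (time_diff \<phi>) i j)
      = grid_sum N (\<lambda>i j. energy_grad \<phi> i j * dipole N a b c d i j)"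
    unfolding energy_grad_def left_diff_distrib grid_sum_diff by (simp add: mult.commute)
  ultimately show ?thesis unfolding grid_sum_mult_dipole[OF ab] by simp
qed

definition admissible :: "real \<Rightarrow> gridfun set" where
  "admissible \<delta> = {\<phi>. \<forall>i j. \<delta> \<le> \<phi> i j \<and> \<phi> i j \<le> 1 / rho N1 N2 - \<delta>}
     \<inter> {\<phi>. periodic N \<phi>} \<inter> {\<phi>. grid_sum N \<phi> = grid_sum N p}"

lemma compact_admissible: "compact (admissible \<delta>)"
  unfolding admissible_def
  by (intro compact_Int_closed compact_grid_box closed_periodic closed_Collect_eq continuous_intros)

lemma continuous_on_energy:
  assumes "0 < \<delta>"
  shows "continuous_on (admissible \<delta>) energy"
proof -
  have "\<phi> i j \<noteq> 0" "1 - rho N1 N2 * \<phi> i j \<noteq> 0" "36 * \<phi> i j * (1 - \<phi> i j) \<noteq> 0"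
    if "\<phi> \<in> admissible \<delta>" for \<phi> i j
  proof -
    have "\<delta> \<le> \<phi> i j \<and> \<phi> i j \<le> 1 / rho N1 N2 - \<delta>" using that unfolding admissible_def by blast
    then have "0 < \<phi> i j" "\<phi> i j < 1 / rho N1 N2" using assms by linarith+
    then show "\<phi> i j \<noteq> 0" "1 - rho N1 N2 * \<phi> i j \<noteq> 0" "36 * \<phi> i j * (1 - \<phi> i j) \<noteq> 0"
      using rho_gt_1[OF N1 N2] rho_inv_lt_1 by (auto simp: less_divide_eq mult.commute)
  qed
  then show ?thesis
    unfolding energy_def[abs_def] local_energy_def nonlocal_energy_def S_prim_def edge_energy_def kappa_def
      Dx_def Dy_def time_diff_def inv_lap_def
    using h dt by (intro continuous_intros) auto
qed

lemma admissible_perturbI: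
  assumes "\<phi> \<in> admissible \<delta>" "a \<in> {1..int N}" "b \<in> {1..int N}" "c \<in> {1..int N}" "d \<in> {1..int N}"
    and "\<And>x y. \<delta> \<le> perturb \<phi> s (dipole N a b c d) x y \<and> perturb \<phi> s (dipole N a b c d) x y \<le> 1 / rho N1 N2 - \<delta>"
  shows "perturb \<phi> s (dipole N a b c d) \<in> admissible \<delta>"
proof -
  have "grid_sum N (perturb \<phi> s (dipole N a b c d)) = grid_sum N \<phi>"
    using grid_sum_mult_dipole[OF assms(2-5), of "\<lambda>_ _. s"]
    unfolding perturb_def by (simp add: grid_sum_add mult.commute)
  then show ?thesis
    using assms(1,6) periodic_perturb[OF _ periodic_dipole] unfolding admissible_def by auto
qed

lemma admissible_mass_transfer:
  assumes adm: "\<phi> \<in> admissible \<delta>" and ab: "a \<in> {1..int N}" "b \<in> {1..int N}"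
    and cd: "c \<in> {1..int N}" "d \<in> {1..int N}" and ne: "(a, b) \<noteq> (c, d)"
    and s: "0 < s" "s \<le> 1 / rho N1 N2 - \<delta> - \<phi> a b" "s \<le> \<phi> c d - \<delta>"
  shows "perturb \<phi> s (dipole N a b c d) \<in> admissible \<delta>"
proof (rule admissible_perturbI[OF adm ab cd])
  fix x y
  have per: "periodic N \<phi>" and box: "\<delta> \<le> \<phi> x y \<and> \<phi> x y \<le> 1 / rho N1 N2 - \<delta>"
    using adm unfolding admissible_def by auto
  have "perturb \<phi> s (dipole N a b c d) x y = \<phi> x y + s * delta_at N a b x y - s * delta_at N c d x y"
    unfolding perturb_def dipole_def by (simp add: algebra_simps)
  moreover have "\<phi> x y = \<phi> a b" if "delta_at N a b x y = 1"
    using that periodic_at_period_rep[OF per, of x y] unfolding delta_at_def by (auto split: if_splits)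
  moreover have "\<phi> x y = \<phi> c d" if "delta_at N c d x y = 1"
    using that periodic_at_period_rep[OF per, of x y] unfolding delta_at_def by (auto split: if_splits)
  moreover have "delta_at N a b x y = 0 \<or> delta_at N c d x y = 0"
    using ne unfolding delta_at_def by auto
  ultimately show "\<delta> \<le> perturb \<phi> s (dipole N a b c d) x y
      \<and> perturb \<phi> s (dipole N a b c d) x y \<le> 1 / rho N1 N2 - \<delta>"
    using box s unfolding delta_at_def by (auto split: if_splits)
qed

lemma minimizer_interior:
  assumes gap: "grad_gap_bound C"
    and \<delta>: "0 < \<delta>" "\<delta> < mean_p" "mean_p < 1 / rho N1 N2 - \<delta>"
    and layer: "Sp N1 N2 \<delta> < Sp N1 N2 mean_p - C" "Sp N1 N2 mean_p + C < Sp N1 N2 (1 / rho N1 N2 - \<delta>)"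
    and adm: "\<phi> \<in> admissible \<delta>" and min: "\<forall>\<psi>\<in>admissible \<delta>. energy \<phi> \<le> energy \<psi>"
  shows "\<delta> < \<phi> x y \<and> \<phi> x y < 1 / rho N1 N2 - \<delta>"
proof -
  have per: "periodic N \<phi>" and mass: "grid_sum N \<phi> = grid_sum N p"
    and box: "\<And>i j. \<delta> \<le> \<phi> i j \<and> \<phi> i j \<le> 1 / rho N1 N2 - \<delta>"
    using adm unfolding admissible_def by auto
  have range: "0 < \<phi> i j \<and> \<phi> i j < 1 / rho N1 N2" for i j using box[of i j] \<delta>(1) by auto
  obtain a b where ab: "a \<in> {1..int N}" "b \<in> {1..int N}" and lo: "\<And>x y. \<phi> a b \<le> \<phi> x y"
    using periodic_attains_min[OF N per] by blast
  obtain c d where cd: "c \<in> {1..int N}" "d \<in> {1..int N}" and hi: "\<And>x y. \<phi> x y \<le> \<phi> c d"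
    using periodic_attains_max[OF N per] by blast
  have mean: "\<phi> a b \<le> mean_p" "mean_p \<le> \<phi> c d"
    using min_le_mean[OF mass lo] mean_le_max[OF mass hi] .
  txt \<open>If the minimiser touches the boundary of the box, moving mass from the maximum to the minimum
    decreases the energy, because \<open>Sp\<close> is very negative near \<open>0\<close> and very positive near \<open>1 / rho\<close>.\<close>
  have "\<delta> < \<phi> a b \<and> \<phi> c d < 1 / rho N1 N2 - \<delta>"
  proof (rule ccontr)
    assume touch: "\<not> (\<delta> < \<phi> a b \<and> \<phi> c d < 1 / rho N1 N2 - \<delta>)"
    then have "\<phi> a b < \<phi> c d" using box[of a b] box[of c d] mean \<delta> by auto
    then have ne: "(a, b) \<noteq> (c, d)" by auto
    define m where "m = min (1 / rho N1 N2 - \<delta> - \<phi> a b) (\<phi> c d - \<delta>)"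
    have "0 < m" unfolding m_def using mean \<delta> by auto
    moreover have "perturb \<phi> s (dipole N a b c d) \<in> admissible \<delta>" if "0 < s" "s < m" for s
      using that unfolding m_def by (intro admissible_mass_transfer[OF adm ab cd ne]) auto
    ultimately have "0 \<le> energy_grad \<phi> a b - energy_grad \<phi> c d"
      by (intro min_directional_deriv_nonneg[OF min DERIV_energy_dipole[OF per range mass ab cd]])
    also have "\<dots> \<le> Sp N1 N2 (\<phi> a b) - Sp N1 N2 (\<phi> c d) + C"
      using gap per range mass lo hi unfolding grad_gap_bound_def by blast
    also have "\<dots> < 0"
    proof (cases "\<delta> < \<phi> a b")
      case True
      then have "\<phi> c d = 1 / rho N1 N2 - \<delta>" using touch box[of c d] by auto
      moreover have "Sp N1 N2 (\<phi> a b) \<le> Sp N1 N2 mean_p"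
        using Sp_mono[OF N1 N2] range[of a b] mean mean_p_range by auto
      ultimately show ?thesis using layer(2) by simp
    next
      case False
      then have "\<phi> a b = \<delta>" using box[of a b] by auto
      moreover have "Sp N1 N2 mean_p \<le> Sp N1 N2 (\<phi> c d)"
        using Sp_mono[OF N1 N2] range[of c d] mean mean_p_range by auto
      ultimately show ?thesis using layer(1) by simp
    qed
    finally show False by simp
  qed
  then show ?thesis using lo[of x y] hi[of x y] by auto
qed

lemma minimizer_grad_const:
  assumes "0 < \<delta>" and adm: "\<phi> \<in> admissible \<delta>" and min: "\<forall>\<psi>\<in>admissible \<delta>. energy \<phi> \<le> energy \<psi>"
    and inner: "\<And>x y. \<delta> < \<phi> x y \<and> \<phi> x y < 1 / rho N1 N2 - \<delta>"
    and ab: "a \<in> {1..int N}" "b \<in> {1..int N}" "c \<in> {1..int N}" "d \<in> {1..int N}"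
  shows "energy_grad \<phi> a b = energy_grad \<phi> c d"
proof -
  have per: "periodic N \<phi>" and mass: "grid_sum N \<phi> = grid_sum N p"
    using adm unfolding admissible_def by auto
  have range: "0 < \<phi> i j \<and> \<phi> i j < 1 / rho N1 N2" for i j using inner[of i j] assms(1) by auto
  obtain u1 u2 where lo: "\<And>x y. \<phi> u1 u2 \<le> \<phi> x y" using periodic_attains_min[OF N per] by metis
  obtain v1 v2 where hi: "\<And>x y. \<phi> x y \<le> \<phi> v1 v2" using periodic_attains_max[OF N per] by metis
  define m where "m = min (\<phi> u1 u2 - \<delta>) (1 / rho N1 N2 - \<delta> - \<phi> v1 v2)"
  have "0 < m" unfolding m_def using inner by auto
  moreover have "perturb \<phi> s (dipole N a b c d) \<in> admissible \<delta>" if "\<bar>s\<bar> < m" for s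
  proof (rule admissible_perturbI[OF adm ab])
    fix x y
    have "\<bar>s * dipole N a b c d x y\<bar> \<le> \<bar>s\<bar>"
      using abs_dipole_le_1[of N a b c d x y] by (simp add: abs_mult mult_left_le)
    then show "\<delta> \<le> perturb \<phi> s (dipole N a b c d) x y
        \<and> perturb \<phi> s (dipole N a b c d) x y \<le> 1 / rho N1 N2 - \<delta>"
      using lo[of x y] hi[of x y] that unfolding perturb_def m_def by (auto simp: abs_le_iff)
  qed
  ultimately have "energy_grad \<phi> a b - energy_grad \<phi> c d = 0"
    by (intro min_directional_deriv_eq_0[OF min DERIV_energy_dipole[OF per range mass ab]])
  then show ?thesis by simp
qed

lemma scheme_solution_exists: "\<exists>\<phi> \<mu>. scheme_solution N N1 N2 \<chi> h dt A p q \<phi> \<mu>"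
proof -
  obtain C where gap: "grad_gap_bound C" using grad_gap_bound_exists ..
  obtain \<delta> where \<delta>: "0 < \<delta>" "\<delta> < mean_p" "mean_p < 1 / rho N1 N2 - \<delta>"
    and layer: "Sp N1 N2 \<delta> < Sp N1 N2 mean_p - C" "Sp N1 N2 mean_p + C < Sp N1 N2 (1 / rho N1 N2 - \<delta>)"
    using Sp_boundary_layer[OF N1 N2 mean_p_range] by blast
  have "(\<lambda>_ _. mean_p) \<in> admissible \<delta>"
    using \<delta> N unfolding admissible_def mean_p_def by (simp add: periodic_const grid_sum_const)
  then obtain \<phi> where adm: "\<phi> \<in> admissible \<delta>" and min: "\<forall>\<psi>\<in>admissible \<delta>. energy \<phi> \<le> energy \<psi>"
    using continuous_attains_inf[OF compact_admissible _ continuous_on_energy[OF \<delta>(1)]] by blast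
  have per: "periodic N \<phi>" and mass: "grid_sum N \<phi> = grid_sum N p"
    using adm unfolding admissible_def by auto
  have inner: "\<delta> < \<phi> x y \<and> \<phi> x y < 1 / rho N1 N2 - \<delta>" for x y
    by (rule minimizer_interior[OF gap \<delta> layer adm min])
  have range: "\<forall>i j. 0 < \<phi> i j \<and> \<phi> i j < 1 / rho N1 N2"
  proof (intro allI)
    fix i j show "0 < \<phi> i j \<and> \<phi> i j < 1 / rho N1 N2" using inner[of i j] \<delta>(1) by linarith
  qed
  define k where "k = energy_grad \<phi> 1 1"
  have "energy_grad \<phi> = (\<lambda>_ _. k)"
    unfolding k_def using N
    by (intro periodic_eqI[OF N periodic_energy_grad[OF per] periodic_const]
        minimizer_grad_const[OF \<delta>(1) adm min inner]) auto
  then have "mu \<phi> = (\<lambda>i j. inv_lap N h (time_diff \<phi>) i j + k)"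
    unfolding energy_grad_def by (simp add: fun_eq_iff algebra_simps)
  then have "lap h (mu \<phi>) i j = time_diff \<phi> i j" for i j
    using lap_inv_lap[OF h N periodic_time_diff[OF per]] grid_sum_time_diff[OF mass]
    by (simp add: lap_add_const)
  then have "scheme_solution N N1 N2 \<chi> h dt A p q \<phi> (mu \<phi>)"
    using per periodic_chem_pot[OF per periodic_p periodic_q] range
    unfolding scheme_solution_def scheme_iff time_diff_def by simp
  then show ?thesis by blast
qed

end

lemma gmean_eq_grid_sum: "gmean N L \<nu> = (L / real N)\<^sup>2 / L\<^sup>2 * grid_sum N \<nu>"
  unfolding gmean_def grid_sum_def ..

theorem theorem4p1:
  fixes N1 N2 \<chi> L dt A :: real and N :: nat and p q :: gridfun
  assumes "N1 > 0" and "N2 > 0" and "\<chi> > 0" and "L > 0" and "N > 0"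
    and "dt > 0" and "A > 0"
    and "periodic N p" and "periodic N q"
    and "\<forall>i j. 0 < p i j \<and> p i j < 1 / rho N1 N2"
    and "\<forall>i j. 0 < q i j \<and> q i j < 1 / rho N1 N2"
    and "gmean N L p = gmean N L q"
  shows "(\<exists>!(\<phi>, \<mu>). periodic N \<phi> \<and> periodic N \<mu>
            \<and> (\<forall>i j. 0 < \<phi> i j \<and> \<phi> i j < 1 / rho N1 N2)
            \<and> scheme N1 N2 \<chi> (L / real N) dt A p q \<phi> \<mu>)
         \<and> (\<forall>\<phi> \<mu>. periodic N \<phi> \<and> periodic N \<mu>
            \<and> (\<forall>i j. 0 < \<phi> i j \<and> \<phi> i j < 1 / rho N1 N2)
            \<and> scheme N1 N2 \<chi> (L / real N) dt A p q \<phi> \<mu>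
            \<longrightarrow> gmean N L \<phi> = gmean N L p)"
proof -
  define h where "h = L / real N"
  have h: "0 < h" unfolding h_def using assms(4,5) by simp
  have mass: "grid_sum N p = grid_sum N q" using assms(4,5,12) unfolding gmean_eq_grid_sum by simp
  interpret bdf2_step N1 N2 \<chi> h dt A N p q
    using assms h mass by unfold_locales auto
  obtain \<phi>0 \<mu>0 where sol: "scheme_solution N N1 N2 \<chi> h dt A p q \<phi>0 \<mu>0"
    using scheme_solution_exists by blast
  have unique: "\<exists>!(\<phi>, \<mu>). scheme_solution N N1 N2 \<chi> h dt A p q \<phi> \<mu>"
  proof (rule ex1I[of _ "(\<phi>0, \<mu>0)"])
    show "case (\<phi>0, \<mu>0) of (\<phi>, \<mu>) \<Rightarrow> scheme_solution N N1 N2 \<chi> h dt A p q \<phi> \<mu>" using sol by simp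
    fix s assume "case s of (\<phi>, \<mu>) \<Rightarrow> scheme_solution N N1 N2 \<chi> h dt A p q \<phi> \<mu>"
    then show "s = (\<phi>0, \<mu>0)"
      using scheme_solution_unique[OF assms(1,2,6,7) h assms(5) _ sol] by (cases s) simp
  qed
  have conserved: "gmean N L \<phi> = gmean N L p" if "periodic N \<mu>" "scheme N1 N2 \<chi> h dt A p q \<phi> \<mu>" for \<phi> \<mu>
    using scheme_mass[OF that assms(6)] mass unfolding gmean_eq_grid_sum by simp
  show ?thesis
    using unique conserved unfolding scheme_solution_def h_def by blast
qed

end
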